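(* Let $k\ge2$, $L\ge3$, and let $T:\Pi_L\to\Sigma_k$ be the map constructed below (with $\Pi=\Pi_L$). Let $y\in Trans(\Pi_L)$ and $i\in\{1,\dots,6\}$. If $y$ satisfies Case $(i)$ in $\Pi_L$, then $T(y)$ satisfies Case $(i')$ in $\Sigma_k$.
   Context: $\Sigma_k=\{0,\dots,k-1\}^{\mathbb{N}}$ with metric $d(x,y)=\sum_{n\ge1}\delta(x_n,y_n)/2^n$ ($\delta(a,b)=0$ if $a=b$, $1$ otherwise) and shift $\sigma$. $\Pi_L=\{x\in\Sigma_k:$ no $L$ consecutive symbols of $x$ are all equal$\}$; $Trans(\Pi_L)=\{y\in\Pi_L:\omega_\sigma(y)=\Pi_L\}$. A finite word is contained in $\Pi$ if it is a prefix of some point of $\Pi$. Construction of $T$: enumerate all finite words contained in $\Pi$ as $C_1,C_2,\dots$; fix a finite word $A_1$ not contained in $\Pi$; for $y\in\Pi$ let $Y_n$ be its first $n$ symbols; $B_n=C_nY_n\cdots Y_n$ ($Y_n$ repeated $|A_n|^2$ times), $A_{n+1}=A_nB_nA_n$; $T(y)$ is the point having every $A_n$ as prefix; the construction requires $|C_n|=o(|A_n|)$. $N(x,U)=\{n\ge1:\sigma^nx\in U\}$; $\overline d,\underline d$ upper/lower asymptotic densities, $B^*,B_*$ Banach upper/lower densities; $\omega_\xi(x)=\{z:\xi(N(x,B_\varepsilon(z)))>0\ \forall\varepsilon>0\}$; $\omega_\sigma$ the $\omega$-limit set. Writing $\omega_\xi$ for $\omega_\xi(x)$: Case (1) $\omega_{B_*}\subsetneq\omega_{\underline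 d}=\omega_{\overline d}=\omega_{B^*}=\omega_\sigma$; (2) $\omega_{B_*}\subsetneq\omega_{\underline d}=\omega_{\overline d}\subsetneq\omega_{B^*}=\omega_\sigma$; (3) $\omega_{B_*}=\omega_{\underline d}\subsetneq\omega_{\overline d}=\omega_{B^*}=\omega_\sigma$; (4) $\omega_{B_*}\subsetneq\omega_{\underline d}\subsetneq\omega_{\overline d}=\omega_{B^*}=\omega_\sigma$; (5) $\omega_{B_*}=\omega_{\underline d}\subsetneq\omega_{\overline d}\subsetneq\omega_{B^*}=\omega_\sigma$; (6) $\omega_{B_*}\subsetneq\omega_{\underline d}\subsetneq\omega_{\overline d}\subsetneq\omega_{B^*}=\omega_\sigma$. Case $(i')$ is Case $(i)$ with the final equality $\omega_{B^*}=\omega_\sigma$ replaced by the strict inclusion $\omega_{B^*}\subsetneq\omega_\sigma$. *)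

theory Defs
  imports "HOL-Analysis.Analysis"
begin

text \<open>Points of the full shift are sequences \<open>x :: nat \<Rightarrow> nat\<close>; the paper's
  \<open>x = x\<^sub>1 x\<^sub>2 \<dots>\<close> corresponds to \<open>x 0, x 1, \<dots>\<close>.\<close>

definition FullShift :: "nat \<Rightarrow> (nat \<Rightarrow> nat) set" where
  "FullShift k = {x. \<forall>n. x n < k}"

definition sdist :: "(nat \<Rightarrow> nat) \<Rightarrow> (nat \<Rightarrow> nat) \<Rightarrow> real" where
  "sdist x y = (\<Sum>n. (if x n = y n then 0 else 1) / 2 ^ (Suc n))"

definition shift :: "(nat \<Rightarrow> nat) \<Rightarrow> (nat \<Rightarrow> nat)" where
  "shift x = (\<lambda>n. x (Suc n))"

definition PiL :: "nat \<Rightarrow> nat \<Rightarrow> (nat \<Rightarrow> nat) set" where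
  "PiL k L = {x \<in> FullShift k. \<not> (\<exists>n. \<forall>j<L. x (n + j) = x n)}"

definition sball :: "(nat \<Rightarrow> nat) set \<Rightarrow> (nat \<Rightarrow> nat) \<Rightarrow> real \<Rightarrow> (nat \<Rightarrow> nat) set" where
  "sball X z e = {w \<in> X. sdist w z < e}"

definition visits :: "(nat \<Rightarrow> nat) \<Rightarrow> (nat \<Rightarrow> nat) set \<Rightarrow> nat set" where
  "visits x U = {n. n \<ge> 1 \<and> (shift ^^ n) x \<in> U}"

definition omega_lim :: "(nat \<Rightarrow> nat) set \<Rightarrow> (nat \<Rightarrow> nat) \<Rightarrow> (nat \<Rightarrow> nat) set" where
  "omega_lim X x = {z \<in> X. \<forall>e>0. infinite (visits x (sball X z e))}"

definition Trans :: "(nat \<Rightarrow> nat) set \<Rightarrow> (nat \<Rightarrow> nat) set" where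
  "Trans X = {y \<in> X. omega_lim X y = X}"

definition upper_dens :: "nat set \<Rightarrow> ereal" where
  "upper_dens A = limsup (\<lambda>n. ereal (real (card (A \<inter> {1..n})) / real n))"

definition lower_dens :: "nat set \<Rightarrow> ereal" where
  "lower_dens A = liminf (\<lambda>n. ereal (real (card (A \<inter> {1..n})) / real n))"

text \<open>Banach densities: \<open>lim\<^sub>n sup\<^sub>m |A \<inter> [m+1,m+n]|/n\<close> and
  \<open>lim\<^sub>n inf\<^sub>m |A \<inter> [m+1,m+n]|/n\<close> (these limits exist).\<close>
definition banach_upper :: "nat set \<Rightarrow> ereal" where
  "banach_upper A = lim (\<lambda>n. SUP m. ereal (real (card (A \<inter> {m+1..m+n})) / real n))"

definition banach_lower :: "nat set \<Rightarrow> ereal" where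
  "banach_lower A = lim (\<lambda>n. INF m. ereal (real (card (A \<inter> {m+1..m+n})) / real n))"

definition omega_xi :: "(nat \<Rightarrow> nat) set \<Rightarrow> (nat set \<Rightarrow> ereal) \<Rightarrow> (nat \<Rightarrow> nat) \<Rightarrow> (nat \<Rightarrow> nat) set" where
  "omega_xi X \<xi> x = {z \<in> X. \<forall>e>0. \<xi> (visits x (sball X z e)) > 0}"

definition rel_step :: "bool \<Rightarrow> 'a set \<Rightarrow> 'a set \<Rightarrow> bool" where
  "rel_step strict A B = (if strict then A \<subset> B else A = B)"

text \<open>Pattern of the first three relations in Cases (1)--(6); True = strict inclusion.\<close>
fun case_pattern :: "nat \<Rightarrow> bool \<times> bool \<times> bool" where
  "case_pattern i =
    (if i = 1 then (True, False, False)
     else if i = 2 then (True, False, True)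
     else if i = 3 then (False, True, False)
     else if i = 4 then (True, True, False)
     else if i = 5 then (False, True, True)
     else (True, True, True))"

text \<open>\<open>sat_case X x i primed\<close>: \<open>x\<close> satisfies Case (i) (primed: Case (i')) in \<open>X\<close>.\<close>
definition sat_case :: "(nat \<Rightarrow> nat) set \<Rightarrow> (nat \<Rightarrow> nat) \<Rightarrow> nat \<Rightarrow> bool \<Rightarrow> bool" where
  "sat_case X x i primed =
    (case case_pattern i of (r1, r2, r3) \<Rightarrow>
       rel_step r1 (omega_xi X banach_lower x) (omega_xi X lower_dens x) \<and>
       rel_step r2 (omega_xi X lower_dens x) (omega_xi X upper_dens x) \<and>
       rel_step r3 (omega_xi X upper_dens x) (omega_xi X banach_upper x) \<and>
       rel_step primed (omega_xi X banach_upper x) (omega_lim X x))"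

definition contained :: "(nat \<Rightarrow> nat) set \<Rightarrow> nat list \<Rightarrow> bool" where
  "contained P w = (\<exists>x\<in>P. \<forall>i<length w. x i = w ! i)"

text \<open>\<open>Aw C A1 y m\<close> is the word \<open>A\<^sub>m\<^sub>+\<^sub>1\<close>; \<open>C n\<close> is \<open>C\<^sub>n\<close> (n \<ge> 1);
  \<open>Y\<^sub>n = map y [0..<n]\<close>; \<open>B\<^sub>n = C\<^sub>n Y\<^sub>n\<dots>Y\<^sub>n\<close> with \<open>|A\<^sub>n|\<^sup>2\<close> copies.\<close>
primrec Aw :: "(nat \<Rightarrow> nat list) \<Rightarrow> nat list \<Rightarrow> (nat \<Rightarrow> nat) \<Rightarrow> nat \<Rightarrow> nat list" where
  "Aw C A1 y 0 = A1"
| "Aw C A1 y (Suc m) =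
     Aw C A1 y m @ (C (Suc m) @ concat (replicate ((length (Aw C A1 y m))\<^sup>2) (map y [0..<Suc m])))
       @ Aw C A1 y m"

definition Tmap :: "(nat \<Rightarrow> nat list) \<Rightarrow> nat list \<Rightarrow> (nat \<Rightarrow> nat) \<Rightarrow> (nat \<Rightarrow> nat)" where
  "Tmap C A1 y = (THE z. \<forall>m. \<forall>i<length (Aw C A1 y m). z i = Aw C A1 y m ! i)"

end

theory Submission
  imports Defs
begin

text \<open>
  \<open>T(y)\<close> is a concatenation of copies of \<open>A\<^sub>n\<close>, of the short words \<open>C\<^sub>n\<close> and of
  \<open>|A\<^sub>n|\<^sup>2\<close> copies of the prefix \<open>Y\<^sub>n\<close> of \<open>y\<close>. Visits of \<open>T(y)\<close> to a cylinder \<open>[z\<^sub>1\<dots>z\<^sub>M]\<close>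
  are therefore of two kinds. Those inside a copy of \<open>Y\<^sub>n\<close> mirror the visits of \<open>y\<close> up to
  \<open>M\<close> per copy; since the copies of \<open>Y\<^sub>n\<close> fill all but a vanishing proportion of
  \<open>A\<^sub>n\<^sub>+\<^sub>1\<close>, positivity of the lower and of the upper density of visits passes between
  \<open>y\<close> and \<open>T(y)\<close>, and positivity of the upper Banach density passes from \<open>y\<close> to \<open>T(y)\<close>.
  The remaining visits happen in windows that meet a junction between blocks; if
  \<open>z \<notin> \<Pi>\<^sub>L\<close>, every visit is of this kind (the \<open>C\<^sub>n\<close> and \<open>Y\<^sub>n\<close> contain no run of length
  \<open>L\<close>), and an induction over the levels shows that such windows have upper Banach density
  zero. Hence the \<open>\<omega>\<close>-sets of \<open>T(y)\<close> and \<open>y\<close> for the lower and the upper density agree,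
  and the \<open>\<omega>\<close>-set of \<open>T(y)\<close> for the upper Banach density is \<open>\<Pi>\<^sub>L\<close>, which is also that of
  \<open>y\<close> because \<open>y\<close> is transitive and satisfies Case \<open>(i)\<close>. Both points contain arbitrarily
  long pieces of \<open>0101\<dots>\<close> and of \<open>001001\<dots>\<close>, which share no word of length 4, so their
  \<open>\<omega>\<close>-sets for the lower Banach density are empty. Finally \<open>T(y)\<close> returns to each prefix
  \<open>A\<^sub>n\<close>, so it lies in its own \<open>\<omega>\<close>-limit set, but it starts with \<open>A\<^sub>1\<close> and so is not
  in \<open>\<Pi>\<^sub>L\<close>: the last inclusion of Case \<open>(i')\<close> is strict.
\<close>

section \<open>Omega-sets via cylinder visits\<close>

lemma funpow_shift_apply: "(shift ^^ n) x i = x (n + i)"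
  by (induction n arbitrary: i) (auto simp: shift_def)

lemma funpow_shift_FullShift: "x \<in> FullShift k \<Longrightarrow> (shift ^^ n) x \<in> FullShift k"
  unfolding FullShift_def by (auto simp: funpow_shift_apply)

lemma PiL_subset_FullShift: "PiL k L \<subseteq> FullShift k"
  unfolding PiL_def by auto

lemma PiL_no_run: "x \<in> PiL k L \<Longrightarrow> \<not> (\<forall>j<L. x (m + j) = x m)"
  unfolding PiL_def by auto

lemma funpow_shift_PiL:
  assumes "x \<in> PiL k L"
  shows "(shift ^^ n) x \<in> PiL k L"
proof -
  have "\<not> (\<forall>j<L. (shift ^^ n) x (m + j) = (shift ^^ n) x m)" for m
    using PiL_no_run[OF assms, of "n + m"] by (simp add: funpow_shift_apply add.assoc)
  moreover have "(shift ^^ n) x \<in> FullShift k"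
    using assms PiL_subset_FullShift funpow_shift_FullShift by blast
  ultimately show ?thesis unfolding PiL_def by auto
qed

definition cyl_visits :: "(nat \<Rightarrow> nat) \<Rightarrow> (nat \<Rightarrow> nat) \<Rightarrow> nat \<Rightarrow> nat set" where
  "cyl_visits x z m = {n. 1 \<le> n \<and> (\<forall>i<m. x (n + i) = z i)}"

lemma summable_sdist: "summable (\<lambda>n. (if x n = y n then 0 else 1) / (2::real) ^ Suc n)"
proof (rule summable_comparison_test)
  show "\<exists>N. \<forall>n\<ge>N. norm ((if x n = y n then 0 else 1) / (2::real) ^ Suc n) \<le> (1/2) ^ Suc n"
    by (auto simp: power_divide)
  show "summable (\<lambda>n. ((1::real)/2) ^ Suc n)"
    by (subst summable_Suc_iff) (simp add: summable_geometric)
qed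

lemma sdist_less_power_imp_eq:
  assumes "sdist w z < (1/2) ^ m" "i < m"
  shows "w i = z i"
proof (rule ccontr)
  assume ne: "w i \<noteq> z i"
  let ?f = "\<lambda>n. (if w n = z n then 0 else 1) / (2::real) ^ Suc n"
  have "sum ?f {i} \<le> suminf ?f"
    by (rule sum_le_suminf[OF summable_sdist]) auto
  then have "?f i \<le> suminf ?f" by simp
  moreover have "?f i = (1/2) ^ Suc i" using ne by (simp add: power_divide)
  moreover have "((1::real)/2) ^ m \<le> (1/2) ^ Suc i"
    using assms(2) by (intro power_decreasing) auto
  ultimately show False using assms(1) unfolding sdist_def by linarith
qed

lemma sdist_less_power_if_eq:
  assumes "\<And>i. i \<le> m \<Longrightarrow> w i = z i"
  shows "sdist w z < (1/2) ^ m"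
proof -
  let ?f = "\<lambda>n. (if w n = z n then 0 else 1) / (2::real) ^ Suc n"
  let ?g = "\<lambda>n. ((1::real)/2) ^ (n + Suc m + 1)"
  have "sdist w z = (\<Sum>n. ?f (n + Suc m)) + (\<Sum>i<Suc m. ?f i)"
    unfolding sdist_def by (rule suminf_split_initial_segment[OF summable_sdist])
  also have "(\<Sum>i<Suc m. ?f i) = 0" using assms by simp
  also have "(\<Sum>n. ?f (n + Suc m)) \<le> (\<Sum>n. ?g n)"
  proof (rule suminf_le)
    show "summable (\<lambda>n. ?f (n + Suc m))"
      using summable_sdist by (rule summable_ignore_initial_segment)
    show "summable ?g"
      unfolding power_add by (intro summable_mult2 summable_geometric) simp
  qed (auto simp: power_divide)
  also have "(\<Sum>n. ?g n) = (\<Sum>n. (1/2::real) ^ n * (1/2) ^ (Suc m + 1))"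
    by (simp add: power_add)
  also have "\<dots> = (\<Sum>n. (1/2::real) ^ n) * (1/2) ^ (Suc m + 1)"
    by (rule suminf_mult2[symmetric]) (simp add: summable_geometric)
  also have "\<dots> = (1/2) ^ Suc m" by (simp add: suminf_geometric)
  also have "\<dots> < (1/2) ^ m" by simp
  finally show ?thesis by simp
qed

lemma visits_sball_subset_cyl_visits:
  assumes "e \<le> (1/2) ^ m"
  shows "visits x (sball X z e) \<subseteq> cyl_visits x z m"
proof
  fix n assume "n \<in> visits x (sball X z e)"
  then have "1 \<le> n" "sdist ((shift ^^ n) x) z < (1/2) ^ m"
    unfolding visits_def sball_def using assms by auto
  then show "n \<in> cyl_visits x z m"
    unfolding cyl_visits_def using sdist_less_power_imp_eq by (fastforce simp: funpow_shift_apply)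
qed

lemma cyl_visits_subset_visits_sball:
  assumes "\<And>n. (shift ^^ n) x \<in> X" "(1/2) ^ m \<le> e"
  shows "cyl_visits x z (Suc m) \<subseteq> visits x (sball X z e)"
proof
  fix n assume "n \<in> cyl_visits x z (Suc m)"
  then have "1 \<le> n" "sdist ((shift ^^ n) x) z < (1/2) ^ m"
    unfolding cyl_visits_def by (auto intro!: sdist_less_power_if_eq simp: funpow_shift_apply)
  with assms show "n \<in> visits x (sball X z e)"
    unfolding visits_def sball_def by auto
qed

definition pos_mono :: "(nat set \<Rightarrow> ereal) \<Rightarrow> bool" where
  "pos_mono \<xi> \<longleftrightarrow> (\<forall>A B. A \<subseteq> B \<longrightarrow> \<xi> A > 0 \<longrightarrow> \<xi> B > 0)"

lemma omega_xi_eq_cyl_visits: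
  assumes "pos_mono \<xi>" and "\<And>n. (shift ^^ n) x \<in> X"
  shows "omega_xi X \<xi> x = {z \<in> X. \<forall>m. \<xi> (cyl_visits x z m) > 0}"
proof (intro set_eqI iffI)
  fix z assume z: "z \<in> omega_xi X \<xi> x"
  have "\<xi> (cyl_visits x z m) > 0" for m
  proof -
    have "\<xi> (visits x (sball X z ((1/2)^m))) > 0" using z unfolding omega_xi_def by auto
    with assms(1) show ?thesis
      unfolding pos_mono_def using visits_sball_subset_cyl_visits[of "(1/2)^m" m] by blast
  qed
  with z show "z \<in> {z \<in> X. \<forall>m. \<xi> (cyl_visits x z m) > 0}" unfolding omega_xi_def by auto
next
  fix z assume z: "z \<in> {z \<in> X. \<forall>m. \<xi> (cyl_visits x z m) > 0}"
  have "\<xi> (visits x (sball X z e)) > 0" if "e > 0" for e :: real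
  proof -
    obtain m where "(1/2::real) ^ m < e"
      using real_arch_pow_inv[OF \<open>e > 0\<close>, of "1/2"] by auto
    then have "cyl_visits x z (Suc m) \<subseteq> visits x (sball X z e)"
      by (intro cyl_visits_subset_visits_sball assms(2)) simp
    with z assms(1) show ?thesis unfolding pos_mono_def by blast
  qed
  with z show "z \<in> omega_xi X \<xi> x" unfolding omega_xi_def by auto
qed

section \<open>Densities\<close>

definition count_upto :: "nat set \<Rightarrow> nat \<Rightarrow> nat" where
  "count_upto A t = card (A \<inter> {1..t})"

lemma card_window_le:
  fixes A :: "nat set"
  shows "card (A \<inter> {q+1..q+l}) \<le> l"
  using card_mono[of "{q+1..q+l}" "A \<inter> {q+1..q+l}"] by simp

lemma card_arith_prog_window:
  fixes b d lo hi :: nat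
  assumes "d > 0" "lo \<le> hi"
  shows "real (card {j. lo < b + j * d \<and> b + j * d < hi}) * real d \<le> real hi - real lo + real d"
proof (cases "{j. lo < b + j * d \<and> b + j * d < hi} = {}")
  case True
  have "real hi - real lo + real d \<ge> 0" using assms(2) by simp
  then show ?thesis unfolding True by simp
next
  case False
  let ?S = "{j. lo < b + j * d \<and> b + j * d < hi}"
  have "j < hi" if "j \<in> ?S" for j
    using that assms(1) le_less_trans[of j "j * d" hi] by simp
  then have "?S \<subseteq> {..<hi}" by blast
  then have fin: "finite ?S" by (rule finite_subset) simp
  define j0 j1 where "j0 = Min ?S" and "j1 = Max ?S"
  have j0: "j0 \<in> ?S" unfolding j0_def using fin False by (rule Min_in)
  have j1: "j1 \<in> ?S" unfolding j1_def using fin False by (rule Max_in)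
  have "?S \<subseteq> {j0..j1}" unfolding j0_def j1_def using fin by auto
  then have "card ?S \<le> j1 + 1 - j0" using card_mono[of "{j0..j1}" ?S] by simp
  moreover have "j0 \<le> j1" using \<open>?S \<subseteq> {j0..j1}\<close> j0 by auto
  ultimately have "real (card ?S) * real d \<le> (real j1 + 1 - real j0) * real d"
    by (intro mult_right_mono) auto
  moreover have "real j1 * real d - real j0 * real d < real hi - real lo"
    using j0 j1 by (simp flip: of_nat_mult of_nat_add add: of_nat_less_iff)
  ultimately show ?thesis by (simp add: algebra_simps)
qed

lemma count_upto_add: "count_upto A (t + d) = count_upto A t + card (A \<inter> {t+1..t+d})"
proof -
  have "A \<inter> {1..t+d} = (A \<inter> {1..t}) \<union> (A \<inter> {t+1..t+d})" by auto
  then show ?thesis unfolding count_upto_def by (simp add: card_Un_disjoint disjoint_iff)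
qed

lemma count_upto_add_le: "count_upto A (t + d) \<le> count_upto A t + d"
  using count_upto_add[of A t d] card_window_le[of A t d] by simp

lemma count_upto_mono: "t \<le> t' \<Longrightarrow> count_upto A t \<le> count_upto A t'"
  unfolding count_upto_def by (rule card_mono) auto

lemma count_upto_le: "count_upto A t \<le> t"
  using count_upto_add_le[of A 0 t] by (simp add: count_upto_def)

lemma count_upto_subset: "A \<subseteq> B \<Longrightarrow> count_upto A t \<le> count_upto B t"
  unfolding count_upto_def by (rule card_mono) auto

lemma real_count_upto_mono: "t \<le> t' \<Longrightarrow> real (count_upto A t) \<le> real (count_upto A t')"
  by (simp add: count_upto_mono)

lemma real_count_upto_add_le: "real (count_upto A (t + d)) \<le> real (count_upto A t) + real d"
  using count_upto_add_le[of A t d] by linarith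

lemma real_count_upto_le: "real (count_upto A t) \<le> real t"
  by (simp add: count_upto_le)

lemma eventually_le_mult_real:
  assumes "0 < g"
  shows "\<forall>\<^sub>F m in sequentially. c \<le> g * real m"
proof -
  obtain N :: nat where "c / g < real N" using reals_Archimedean2 by blast
  then have "c < g * real N" using assms by (simp add: field_simps)
  moreover have "g * real N \<le> g * real m" if "N \<le> m" for m using assms that by simp
  ultimately have "c \<le> g * real m" if "N \<le> m" for m using that by (meson less_le_trans less_imp_le)
  then show ?thesis unfolding eventually_sequentially by blast
qed

lemma lower_dens_pos_iff:
  "lower_dens A > 0 \<longleftrightarrow> (\<exists>g>0. \<forall>\<^sub>F n in sequentially. g * real n \<le> real (count_upto A n))"
  unfolding eventually_sequentially
proof
  let ?f = "\<lambda>n. ereal (real (count_upto A n) / real n)"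
  assume "lower_dens A > 0"
  then obtain g where g: "0 < ereal g" "ereal g < lower_dens A"
    by (metis ereal_dense2 zero_ereal_def)
  then have "eventually (\<lambda>n. ereal g < ?f n) sequentially"
    unfolding lower_dens_def count_upto_def by (intro less_LiminfD) simp
  then obtain N where N: "\<And>n. n \<ge> N \<Longrightarrow> g < real (count_upto A n) / real n"
    by (auto simp: eventually_sequentially)
  have "g * real n \<le> real (count_upto A n)" if "n \<ge> N" for n
  proof (cases "n = 0")
    case False
    then show ?thesis using N[OF that] by (simp add: less_divide_eq)
  qed (use N[OF that] g(1) in simp)
  then have "\<forall>n\<ge>N. g * real n \<le> real (count_upto A n)" by blast
  with g(1) show "\<exists>g>0. \<exists>N. \<forall>n\<ge>N. g * real n \<le> real (count_upto A n)" by auto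
next
  assume "\<exists>g>0. \<exists>N. \<forall>n\<ge>N. g * real n \<le> real (count_upto A n)"
  then obtain g N where g: "g > 0" and N: "\<And>n. n \<ge> N \<Longrightarrow> g * real n \<le> real (count_upto A n)"
    by auto
  have "eventually (\<lambda>n. ereal g \<le> ereal (real (count_upto A n) / real n)) sequentially"
    unfolding eventually_sequentially
    by (rule exI[of _ "max N 1"]) (simp add: N le_divide_eq)
  then have "ereal g \<le> lower_dens A"
    unfolding lower_dens_def count_upto_def[symmetric] by (rule Liminf_bounded)
  with g show "lower_dens A > 0" by (meson ereal_less(2) less_le_trans zero_ereal_def)
qed

lemma upper_dens_pos_iff:
  "upper_dens A > 0 \<longleftrightarrow> (\<exists>g>0. \<exists>\<^sub>F n in sequentially. g * real n \<le> real (count_upto A n))"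
  unfolding frequently_sequentially
proof
  let ?f = "\<lambda>n. ereal (real (card (A \<inter> {1..n})) / real n)"
  assume "upper_dens A > 0"
  then obtain g where g: "0 < ereal g" "ereal g < upper_dens A"
    by (metis ereal_dense2 zero_ereal_def)
  have "\<exists>n\<ge>N. g * real n \<le> real (count_upto A n)" for N
  proof (rule ccontr)
    assume "\<not> ?thesis"
    then have "real (count_upto A n) \<le> g * real n" if "n \<ge> N" for n
      using that by (meson less_imp_le not_le)
    then have "eventually (\<lambda>n. ereal (real (count_upto A n) / real n) \<le> ereal g) sequentially"
      unfolding eventually_sequentially
      by (intro exI[of _ "max N 1"]) (simp add: divide_le_eq)
    then have "upper_dens A \<le> ereal g"
      unfolding upper_dens_def count_upto_def[symmetric] by (rule Limsup_bounded)
    with g(2) show False by simp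
  qed
  with g(1) show "\<exists>g>0. \<forall>N. \<exists>n\<ge>N. g * real n \<le> real (count_upto A n)" by auto
next
  let ?f = "\<lambda>n. ereal (real (card (A \<inter> {1..n})) / real n)"
  assume "\<exists>g>0. \<forall>N. \<exists>n\<ge>N. g * real n \<le> real (count_upto A n)"
  then obtain g where g: "g > 0" and often: "\<And>N. \<exists>n\<ge>N. g * real n \<le> real (count_upto A n)"
    by auto
  show "upper_dens A > 0"
  proof (rule ccontr)
    assume "\<not> upper_dens A > 0"
    then have "limsup ?f < ereal g" using g unfolding upper_dens_def
      by (metis ereal_less(2) le_less_trans not_less zero_ereal_def)
    then have "eventually (\<lambda>n. ?f n < ereal g) sequentially" by (rule Limsup_lessD)
    then obtain N where N: "\<And>n. n \<ge> N \<Longrightarrow> ?f n < ereal g"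
      by (auto simp: eventually_sequentially)
    obtain n where n: "n \<ge> max N 1" "g * real n \<le> real (count_upto A n)" using often by blast
    then have "ereal g \<le> ?f n" by (simp add: le_divide_eq count_upto_def)
    with N[of n] n show False by simp
  qed
qed

lemma real_count_upto_subset: "A \<subseteq> B \<Longrightarrow> real (count_upto A t) \<le> real (count_upto B t)"
  by (simp add: count_upto_subset)

lemma pos_mono_lower_dens: "pos_mono lower_dens"
  unfolding pos_mono_def
proof (intro allI impI)
  fix A B :: "nat set" assume "A \<subseteq> B" "lower_dens A > 0"
  then obtain g where "g > 0" "\<forall>\<^sub>F n in sequentially. g * real n \<le> real (count_upto A n)"
    unfolding lower_dens_pos_iff by blast
  moreover from \<open>A \<subseteq> B\<close> have "real (count_upto A n) \<le> real (count_upto B n)" for n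
    by (rule real_count_upto_subset)
  ultimately have "\<forall>\<^sub>F n in sequentially. g * real n \<le> real (count_upto B n)"
    by (auto elim!: eventually_mono intro: order_trans)
  with \<open>g > 0\<close> show "lower_dens B > 0" unfolding lower_dens_pos_iff by blast
qed

lemma pos_mono_upper_dens: "pos_mono upper_dens"
  unfolding pos_mono_def
proof (intro allI impI)
  fix A B :: "nat set" assume "A \<subseteq> B" "upper_dens A > 0"
  then obtain g where "g > 0" "\<exists>\<^sub>F n in sequentially. g * real n \<le> real (count_upto A n)"
    unfolding upper_dens_pos_iff by blast
  moreover from \<open>A \<subseteq> B\<close> have "real (count_upto A n) \<le> real (count_upto B n)" for n
    by (rule real_count_upto_subset)
  ultimately have "\<exists>\<^sub>F n in sequentially. g * real n \<le> real (count_upto B n)"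
    by (auto elim!: frequently_elim1 intro: order_trans)
  with \<open>g > 0\<close> show "upper_dens B > 0" unfolding upper_dens_pos_iff by blast
qed

lemma upper_dens_pos_if_lower_dens_pos: "lower_dens A > 0 \<Longrightarrow> upper_dens A > 0"
  unfolding lower_dens_pos_iff upper_dens_pos_iff using eventually_frequently by force

definition max_window :: "nat set \<Rightarrow> nat \<Rightarrow> nat" where
  "max_window A l = Max (range (\<lambda>q. card (A \<inter> {q+1..q+l})))"

lemma finite_window_cards:
  fixes A :: "nat set"
  shows "finite (range (\<lambda>q. card (A \<inter> {q+1..q+l})))"
proof (rule finite_subset)
  show "range (\<lambda>q. card (A \<inter> {q+1..q+l})) \<subseteq> {..l}" using card_window_le[of A] by auto
qed simp

lemma max_window_ge: "card (A \<inter> {q+1..q+l}) \<le> max_window A l"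
  unfolding max_window_def by (rule Max_ge[OF finite_window_cards]) auto

lemma max_window_attained:
  obtains q where "max_window A l = card (A \<inter> {q+1..q+l})"
proof -
  have "max_window A l \<in> range (\<lambda>q. card (A \<inter> {q+1..q+l}))"
    unfolding max_window_def by (rule Max_in[OF finite_window_cards]) auto
  then show ?thesis using that by auto
qed

lemma max_window_0: "max_window A 0 = 0"
  unfolding max_window_def by simp

lemma max_window_mono:
  assumes "A \<subseteq> B"
  shows "max_window A l \<le> max_window B l"
proof -
  obtain q where "max_window A l = card (A \<inter> {q+1..q+l})" using max_window_attained .
  also have "\<dots> \<le> card (B \<inter> {q+1..q+l})" using assms by (intro card_mono) auto
  also have "\<dots> \<le> max_window B l" by (rule max_window_ge)
  finally show ?thesis .
qed

lemma max_window_subadditive: "max_window A (l1 + l2) \<le> max_window A l1 + max_window A l2"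
proof -
  obtain q where q: "max_window A (l1 + l2) = card (A \<inter> {q+1..q+(l1+l2)})"
    using max_window_attained by blast
  have "A \<inter> {q+1..q+(l1+l2)} = (A \<inter> {q+1..q+l1}) \<union> (A \<inter> {(q+l1)+1..(q+l1)+l2})" by auto
  then have "card (A \<inter> {q+1..q+(l1+l2)}) \<le> card (A \<inter> {q+1..q+l1}) + card (A \<inter> {(q+l1)+1..(q+l1)+l2})"
    by (metis card_Un_le)
  also have "\<dots> \<le> max_window A l1 + max_window A l2" by (intro add_mono max_window_ge)
  finally show ?thesis using q by simp
qed

lemma subadditive_ratio_le:
  fixes h :: "nat \<Rightarrow> nat"
  assumes sub: "\<And>m n. h (m + n) \<le> h m + h n" and h0: "h 0 = 0" and "k \<ge> 1" "n \<ge> 1"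
  shows "real (h n) / real n \<le> real (h k) / real k + real k * real (h 1) / real n"
proof -
  have h_mult: "h (q * k) \<le> q * h k" for q k
  proof (induction q)
    case (Suc q)
    have "h (k + q * k) \<le> h k + h (q * k)" by (rule sub)
    with Suc show ?case by simp
  qed (simp add: h0)
  define q t where "q = n div k" and "t = n mod k"
  have "h n \<le> h (q * k) + h t"
    using sub[of "q * k" t] unfolding q_def t_def by simp
  also have "\<dots> \<le> q * h k + k * h 1"
  proof (rule add_mono)
    have "t < k" unfolding t_def using assms(3) by simp
    then have "t * h 1 \<le> k * h 1" by simp
    then show "h t \<le> k * h 1" using h_mult[of t 1] by (metis mult.right_neutral order_trans)
  qed (rule h_mult)
  finally have "real (h n) \<le> real q * real (h k) + real k * real (h 1)"
    by (metis of_nat_add of_nat_le_iff of_nat_mult)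
  moreover have "real q * real (h k) \<le> real n * (real (h k) / real k)"
  proof -
    have "real q * real k \<le> real n"
      unfolding q_def by (metis div_times_less_eq_dividend of_nat_le_iff of_nat_mult)
    then show ?thesis using assms(3)
      by (simp add: field_simps) (metis mult.assoc mult_right_mono of_nat_0_le_iff)
  qed
  ultimately have "real (h n) \<le> real n * (real (h k) / real k) + real k * real (h 1)"
    by linarith
  then show ?thesis using assms(4) by (simp add: field_simps)
qed

lemma subadditive_ratio_tendsto_Inf:
  fixes h :: "nat \<Rightarrow> nat"
  assumes sub: "\<And>m n. h (m + n) \<le> h m + h n" and h0: "h 0 = 0"
  shows "(\<lambda>n. real (h n) / real n) \<longlonglongrightarrow> (INF n\<in>{1..}. real (h n) / real n)"
proof (rule LIMSEQ_I)
  let ?I = "INF n\<in>{1..}. real (h n) / real n"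
  have bdd: "bdd_below ((\<lambda>n. real (h n) / real n) ` {1..})"
    by (rule bdd_belowI[of _ 0]) auto
  fix r :: real assume r: "r > 0"
  obtain k where k: "k \<ge> 1" "real (h k) / real k < ?I + r / 2"
    using cINF_less_iff[OF _ bdd, of "?I + r / 2"] r by auto
  obtain N where N: "real (k * h 1) / r * 2 < real N" using reals_Archimedean2 by blast
  have "norm (real (h n) / real n - ?I) < r" if n: "n \<ge> max N 1" for n
  proof -
    have "real (k * h 1) < r / 2 * real N" using N r by (simp add: field_simps)
    also have "\<dots> \<le> r / 2 * real n" using n r by simp
    finally have "real k * real (h 1) / real n < r / 2" using n by (simp add: field_simps)
    moreover have "real (h n) / real n \<le> real (h k) / real k + real k * real (h 1) / real n"
      using n by (intro subadditive_ratio_le[OF sub h0 k(1)]) simp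
    ultimately have "real (h n) / real n < ?I + r" using k(2) by linarith
    moreover have "?I \<le> real (h n) / real n" using n by (intro cINF_lower[OF bdd]) auto
    ultimately show ?thesis by simp
  qed
  then show "\<exists>no. \<forall>n\<ge>no. norm (real (h n) / real n - ?I) < r" by blast
qed

lemma banach_upper_eq_Inf: "banach_upper A = ereal (INF n\<in>{1..}. real (max_window A n) / real n)"
proof -
  have "(SUP m. ereal (real (card (A \<inter> {m+1..m+n})) / real n)) = ereal (real (max_window A n) / real n)"
    for n
  proof (rule antisym)
    show "(SUP m. ereal (real (card (A \<inter> {m+1..m+n})) / real n)) \<le> ereal (real (max_window A n) / real n)"
    proof (rule SUP_least)
      fix m
      show "ereal (real (card (A \<inter> {m+1..m+n})) / real n) \<le> ereal (real (max_window A n) / real n)"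
        using max_window_ge[of A m n] by (simp add: divide_right_mono)
    qed
    obtain q where "max_window A n = card (A \<inter> {q+1..q+n})" using max_window_attained by blast
    then show "ereal (real (max_window A n) / real n) \<le> (SUP m. ereal (real (card (A \<inter> {m+1..m+n})) / real n))"
      by (intro SUP_upper2[of q]) auto
  qed
  moreover have "(\<lambda>n. ereal (real (max_window A n) / real n)) \<longlonglongrightarrow> ereal (INF n\<in>{1..}. real (max_window A n) / real n)"
    using subadditive_ratio_tendsto_Inf[of "max_window A"] max_window_subadditive max_window_0
    by (simp add: lim_ereal)
  ultimately show ?thesis unfolding banach_upper_def by (simp add: limI)
qed

lemma banach_upper_pos_iff: "banach_upper A > 0 \<longleftrightarrow> (\<exists>g>0. \<forall>l\<ge>1. g * real l \<le> real (max_window A l))"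
proof -
  let ?I = "INF n\<in>{1..}. real (max_window A n) / real n"
  have bdd: "bdd_below ((\<lambda>n. real (max_window A n) / real n) ` {1..})"
    by (rule bdd_belowI[of _ 0]) auto
  have "g \<le> ?I \<longleftrightarrow> (\<forall>l\<ge>1. g * real l \<le> real (max_window A l))" for g
    by (subst le_cINF_iff[OF _ bdd]) (auto simp: le_divide_eq)
  moreover have "0 < ?I \<longleftrightarrow> (\<exists>g>0. g \<le> ?I)"
    using dense[of 0 ?I] by (auto intro: less_le_trans)
  ultimately show ?thesis unfolding banach_upper_eq_Inf by simp
qed

lemma banach_upper_pos_if_upper_dens_pos:
  assumes "upper_dens A > 0"
  shows "banach_upper A > 0"
proof -
  let ?I = "INF n\<in>{1..}. real (max_window A n) / real n"
  obtain g where g: "g > 0" "\<exists>\<^sub>F n in sequentially. g * real n \<le> real (count_upto A n)"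
    using assms unfolding upper_dens_pos_iff by blast
  have "g \<le> ?I"
  proof (rule ccontr)
    assume "\<not> g \<le> ?I"
    have "(\<lambda>n. real (max_window A n) / real n) \<longlonglongrightarrow> ?I"
      by (rule subadditive_ratio_tendsto_Inf[OF max_window_subadditive max_window_0])
    then have "\<forall>\<^sub>F n in sequentially. real (max_window A n) / real n < g"
      using \<open>\<not> g \<le> ?I\<close> by (simp add: order_tendstoD(2))
    moreover have "\<forall>\<^sub>F n in sequentially. 1 \<le> n" by simp
    ultimately have "\<forall>\<^sub>F n in sequentially. real (max_window A n) / real n < g \<and> 1 \<le> n"
      by (rule eventually_conj)
    from frequently_eventually_frequently[OF g(2) this]
    obtain n where n: "g * real n \<le> real (count_upto A n)" "real (max_window A n) / real n < g" "1 \<le> n"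
      by (auto elim: frequentlyE)
    have "count_upto A n \<le> max_window A n"
      using max_window_ge[of A 0 n] unfolding count_upto_def by simp
    with n show False by (simp add: divide_less_eq)
  qed
  with g(1) show ?thesis unfolding banach_upper_eq_Inf by simp
qed

lemma pos_mono_banach_upper: "pos_mono banach_upper"
  unfolding pos_mono_def banach_upper_pos_iff
  by (meson max_window_mono of_nat_le_iff order_trans)

lemma infinite_if_banach_upper_pos:
  assumes "banach_upper A > 0"
  shows "infinite A"
proof
  assume "finite A"
  obtain g where g: "g > 0" "\<And>l. l \<ge> 1 \<Longrightarrow> g * real l \<le> real (max_window A l)"
    using assms unfolding banach_upper_pos_iff by auto
  obtain l :: nat where l: "real (card A) / g < real l" using reals_Archimedean2 by blast
  then have "l \<ge> 1" using g(1) by (cases l) (auto simp: divide_less_0_iff)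
  obtain q where "max_window A l = card (A \<inter> {q+1..q+l})" using max_window_attained by blast
  then have "max_window A l \<le> card A" using \<open>finite A\<close> by (simp add: card_mono)
  moreover have "real (card A) < g * real l" using l g(1) by (simp add: field_simps)
  ultimately show False using g(2)[OF \<open>l \<ge> 1\<close>] by linarith
qed

lemma banach_lower_eq_0_if_gaps:
  assumes "\<And>l. l \<ge> 1 \<Longrightarrow> \<exists>q. A \<inter> {q+1..q+l} = {}"
  shows "banach_lower A = 0"
proof -
  have "(INF m. ereal (real (card (A \<inter> {m+1..m+n})) / real n)) = 0" for n
  proof (cases "n = 0")
    case False
    then obtain q where "A \<inter> {q+1..q+n} = {}" using assms by force
    then show ?thesis
      by (intro antisym INF_lower2[of q] INF_greatest) auto
  qed simp
  then show ?thesis unfolding banach_lower_def by (simp add: limI)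
qed

lemma omega_xi_banach_lower_empty:
  assumes P: "\<And>l. cyl_visits x P l \<noteq> {}" and Q: "\<And>l. cyl_visits x Q l \<noteq> {}"
    and disjoint: "\<And>w q q'. \<forall>i<m. P (q + i) = w i \<Longrightarrow> \<forall>i<m. Q (q' + i) = w i \<Longrightarrow> False"
  shows "omega_xi X banach_lower x = {}"
proof (rule ccontr)
  assume "omega_xi X banach_lower x \<noteq> {}"
  then obtain z where z: "z \<in> omega_xi X banach_lower x" by blast
  obtain R where R: "\<And>l. cyl_visits x R l \<noteq> {}" and Rz: "\<And>q. \<not> (\<forall>i<m. R (q + i) = z i)"
  proof (cases "\<exists>q. \<forall>i<m. P (q + i) = z i")
    case True
    then obtain q where "\<forall>i<m. P (q + i) = z i" by blast
    with Q disjoint show ?thesis by (intro that[of Q]) blast+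
  next
    case False
    with P show ?thesis by (intro that[of P]) blast+
  qed
  let ?A = "visits x (sball X z ((1/2)^m))"
  have "banach_lower ?A = 0"
  proof (rule banach_lower_eq_0_if_gaps)
    fix l :: nat
    obtain p where p: "p \<ge> 1" "\<forall>i<l + m. x (p + i) = R i"
      using R[of "l + m"] unfolding cyl_visits_def by auto
    have "n \<notin> ?A" if n: "p \<le> n" "n < p + l" for n
    proof
      assume "n \<in> ?A"
      then have "\<forall>i<m. x (n + i) = z i"
        using visits_sball_subset_cyl_visits[of "(1/2)^m" m x X z] unfolding cyl_visits_def by auto
      moreover have "x (n + i) = R (n - p + i)" if "i < m" for i
      proof -
        have "n - p + i < l + m" using n that by arith
        then have "x (p + (n - p + i)) = R (n - p + i)" using p(2) by blast
        moreover have "p + (n - p + i) = n + i" using n(1) by simp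
        ultimately show ?thesis by simp
      qed
      ultimately have "\<forall>i<m. R (n - p + i) = z i" by simp
      with Rz show False by blast
    qed
    moreover have "{p - 1 + 1..p - 1 + l} = {p..<p + l}" using p(1) by auto
    ultimately have "?A \<inter> {p - 1 + 1..p - 1 + l} = {}" by auto
    then show "\<exists>q. ?A \<inter> {q + 1..q + l} = {}" by blast
  qed
  moreover have "banach_lower ?A > 0" using z unfolding omega_xi_def by simp
  ultimately show False by simp
qed

definition alternating :: "nat \<Rightarrow> nat" where
  "alternating i = i mod 2"

definition period3 :: "nat \<Rightarrow> nat" where
  "period3 i = (if i mod 3 = 2 then 1 else 0)"

lemma in_PiL_if_changes:
  assumes "\<And>n. x n < k" and "\<And>m. \<exists>j<L. x (m + j) \<noteq> x m"
  shows "x \<in> PiL k L"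
  using assms unfolding PiL_def FullShift_def by blast

lemma alternating_PiL:
  assumes "k \<ge> 2" "L \<ge> 2"
  shows "alternating \<in> PiL k L"
proof (rule in_PiL_if_changes)
  show "alternating n < k" for n using assms(1) unfolding alternating_def by simp
  show "\<exists>j<L. alternating (m + j) \<noteq> alternating m" for m
    using assms(2) by (intro exI[of _ 1]) (simp add: alternating_def mod_Suc)
qed

lemma period3_PiL:
  assumes "k \<ge> 2" "L \<ge> 3"
  shows "period3 \<in> PiL k L"
proof (rule in_PiL_if_changes)
  show "period3 n < k" for n using assms(1) unfolding period3_def by simp
  show "\<exists>j<L. period3 (m + j) \<noteq> period3 m" for m
  proof (cases "m mod 3 = 2")
    case True
    then have "(m + 1) mod 3 = 0" by presburger
    with True assms(2) show ?thesis by (intro exI[of _ 1]) (simp add: period3_def)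
  next
    case False
    then have "(m + 1) mod 3 = 2 \<or> (m + 2) mod 3 = 2" by presburger
    with False assms(2) show ?thesis
      by (elim disjE; intro exI[of _ 1] exI[of _ 2]) (simp_all add: period3_def)
  qed
qed

lemma alternating_Suc: "alternating (Suc n) \<noteq> alternating n"
  unfolding alternating_def by (simp add: mod_Suc)

lemma period3_repeats: "\<exists>i<3. period3 (q + Suc i) = period3 (q + i)"
proof -
  consider "q mod 3 = 0" | "q mod 3 = 1" | "q mod 3 = 2" by linarith
  then show ?thesis
  proof cases
    case 1
    then have "(q + Suc 0) mod 3 = 1" by (simp add: mod_Suc)
    with 1 show ?thesis by (intro exI[of _ 0]) (simp add: period3_def)
  next
    case 2
    then have "(q + 2) mod 3 = 0" "(q + Suc 2) mod 3 = 1" by (simp_all add: mod_Suc)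
    then show ?thesis by (intro exI[of _ 2]) (simp add: period3_def)
  next
    case 3
    then have "(q + 1) mod 3 = 0" "(q + Suc 1) mod 3 = 1" by (simp_all add: mod_Suc)
    then show ?thesis by (intro exI[of _ 1]) (simp add: period3_def)
  qed
qed

lemma alternating_period3_no_common_word:
  assumes "\<forall>i<4. alternating (q + i) = w i" "\<forall>i<4. period3 (q' + i) = w i"
  shows False
proof -
  obtain i where i: "i < 3" "period3 (q' + Suc i) = period3 (q' + i)"
    using period3_repeats by blast
  then have "i < 4" "Suc i < 4" by simp_all
  then have "alternating (q + i) = w i" "alternating (q + Suc i) = w (Suc i)"
    "period3 (q' + i) = w i" "period3 (q' + Suc i) = w (Suc i)"
    using assms by blast+
  with i(2) alternating_Suc[of "q + i"] show False by simp
qed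

lemma contained_no_run:
  assumes "contained (PiL k L) w" "m + L \<le> length w"
  shows "\<not> (\<forall>t<L. w ! (m + t) = w ! m)"
proof
  assume run: "\<forall>t<L. w ! (m + t) = w ! m"
  obtain x where x: "x \<in> PiL k L" "\<And>i. i < length w \<Longrightarrow> x i = w ! i"
    using assms(1) unfolding contained_def by auto
  have "x (m + t) = x m" if "t < L" for t
  proof -
    have "m + t < length w" "m < length w" using assms(2) that by auto
    then show ?thesis using run x(2) that by simp
  qed
  then show False using PiL_no_run[OF x(1)] by blast
qed

lemma contained_nth_less:
  assumes "contained (PiL k L) w" "i < length w"
  shows "w ! i < k"
proof -
  obtain x where x: "x \<in> PiL k L" "\<And>i. i < length w \<Longrightarrow> x i = w ! i"
    using assms(1) unfolding contained_def by auto
  then have "x i < k" unfolding PiL_def FullShift_def by auto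
  then show ?thesis using x(2)[OF assms(2)] by simp
qed

section \<open>The words \<open>A\<^sub>n\<close> and the point \<open>T(y)\<close>\<close>

lemma nth_concat_replicate:
  "j < R \<Longrightarrow> d < length w \<Longrightarrow> concat (replicate R w) ! (j * length w + d) = w ! d"
proof (induction R arbitrary: j)
  case (Suc R)
  show ?case
  proof (cases j)
    case (Suc j')
    then have "concat (replicate (Suc R) w) ! (j * length w + d) = concat (replicate R w) ! (j' * length w + d)"
      using Suc.prems by (simp add: nth_append)
    then show ?thesis using Suc.IH[of j'] Suc.prems \<open>j = Suc j'\<close> by simp
  qed (use Suc.prems in \<open>simp add: nth_append\<close>)
qed simp

locale tmap_construction =
  fixes C :: "nat \<Rightarrow> nat list" and A1 :: "nat list" and y :: "nat \<Rightarrow> nat"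
  assumes A1_ne: "A1 \<noteq> []"
begin

text \<open>\<open>W n\<close> is \<open>A\<^sub>n\<^sub>+\<^sub>1\<close>, of length \<open>a n\<close>. Inside \<open>W (Suc n)\<close>, the word \<open>C\<^sub>n\<^sub>+\<^sub>1\<close> starts at
  position \<open>a n\<close>, the \<open>j\<close>-th of the \<open>r n\<close> copies of \<open>Y\<^sub>n\<^sub>+\<^sub>1\<close> starts at \<open>u n j\<close>, and the
  second copy of \<open>W n\<close> starts at \<open>s n\<close>.\<close>

abbreviation W :: "nat \<Rightarrow> nat list" where "W n \<equiv> Aw C A1 y n"
definition a :: "nat \<Rightarrow> nat" where "a n = length (W n)"
definition cl :: "nat \<Rightarrow> nat" where "cl n = length (C (Suc n))"
definition r :: "nat \<Rightarrow> nat" where "r n = (a n)\<^sup>2"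
definition u :: "nat \<Rightarrow> nat \<Rightarrow> nat" where "u n j = a n + cl n + j * Suc n"
definition s :: "nat \<Rightarrow> nat" where "s n = u n (r n)"
definition T :: "nat \<Rightarrow> nat" where "T = Tmap C A1 y"

lemma W_Suc: "W (Suc n) = W n @ C (Suc n) @ concat (replicate (r n) (map y [0..<Suc n])) @ W n"
  by (simp add: r_def a_def)

lemma a_Suc: "a (Suc n) = s n + a n"
  unfolding a_def s_def u_def cl_def W_Suc
  by (simp add: length_concat sum_list_replicate flip: a_def)

lemma a_le_s: "a n \<le> s n"
  unfolding s_def u_def by simp

lemma s_ge: "s n \<ge> a n + r n * Suc n"
  unfolding s_def u_def by simp

lemma u_Suc: "u n (Suc j) = u n j + Suc n"
  unfolding u_def by simp

lemma u_le_s: "j \<le> r n \<Longrightarrow> u n j \<le> s n"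
  unfolding s_def u_def using mult_le_mono1[of j "r n" "Suc n"] by linarith

lemma a_pos: "a n \<ge> 1"
proof (induction n)
  case 0
  then show ?case using A1_ne unfolding a_def by (cases A1) auto
next
  case (Suc n)
  then show ?case using a_Suc by simp
qed

lemma r_ge_a: "r n \<ge> a n"
  unfolding r_def using a_pos[of n] by (simp add: power2_eq_square)

lemma a_Suc_ge_double: "a (Suc n) \<ge> 2 * a n"
  using a_Suc[of n] a_le_s[of n] by simp

lemma a_ge_Suc: "a n \<ge> Suc n"
proof (induction n)
  case 0
  then show ?case using a_pos[of 0] by simp
next
  case (Suc n)
  then show ?case using a_Suc_ge_double[of n] by simp
qed

lemma s_ge_index: "n \<le> m \<Longrightarrow> n \<le> s m"
  using a_ge_Suc[of m] a_le_s[of m] by simp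

lemma strict_mono_a: "strict_mono a"
proof (rule strict_mono_Suc_iff[THEN iffD2], intro allI)
  show "a n < a (Suc n)" for n using a_Suc_ge_double[of n] a_pos[of n] by simp
qed

lemma a_mono: "n \<le> m \<Longrightarrow> a n \<le> a m"
  using strict_mono_a by (simp add: strict_mono_less_eq)

lemma nth_W_mono: "n \<le> m \<Longrightarrow> i < a n \<Longrightarrow> W m ! i = W n ! i"
proof (induction m)
  case (Suc m)
  show ?case
  proof (cases "n = Suc m")
    case False
    with Suc.prems have "n \<le> m" by simp
    then have "i < a m" using Suc.prems a_mono less_le_trans by blast
    with \<open>n \<le> m\<close> show ?thesis using Suc.IH Suc.prems by (simp add: nth_append a_def)
  qed simp
qed simp

lemma T_nth_W: "i < a n \<Longrightarrow> T i = W n ! i"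
proof -
  let ?P = "\<lambda>z. \<forall>m. \<forall>i<length (W m). z i = W m ! i"
  define z where "z i = W i ! i" for i
  have diag: "i < a i" for i using a_ge_Suc[of i] by simp
  have "?P z"
  proof (intro allI impI)
    fix m i assume "i < length (W m)"
    then show "z i = W m ! i"
      unfolding z_def using diag[of i] nth_W_mono[of i m i] nth_W_mono[of m i i]
      by (cases "i \<le> m") (auto simp: a_def)
  qed
  moreover have "z' = z" if "?P z'" for z'
    using that diag unfolding z_def a_def by auto
  ultimately have "T = z" unfolding T_def Tmap_def by (rule the_equality)
  with \<open>?P z\<close> show "i < a n \<Longrightarrow> T i = W n ! i" by (simp add: a_def)
qed

lemma T_nth_A1: "i < length A1 \<Longrightarrow> T i = A1 ! i"
  using T_nth_W[of i 0] by (simp add: a_def)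

lemma T_at_C: "k < cl n \<Longrightarrow> T (a n + k) = C (Suc n) ! k"
proof -
  assume k: "k < cl n"
  then have "a n + k < a (Suc n)" using a_Suc unfolding s_def u_def by simp
  then have "T (a n + k) = W (Suc n) ! (a n + k)" by (rule T_nth_W)
  also have "\<dots> = C (Suc n) ! k" using k unfolding W_Suc by (simp add: nth_append a_def cl_def)
  finally show ?thesis .
qed

lemma T_at_Y: "j < r n \<Longrightarrow> d < Suc n \<Longrightarrow> T (u n j + d) = y d"
proof -
  assume j: "j < r n" and d: "d < Suc n"
  have lt: "j * Suc n + d < r n * Suc n"
  proof -
    have "j * Suc n + d < Suc j * Suc n" using d by simp
    also have "\<dots> \<le> r n * Suc n" using j by (intro mult_right_mono) auto
    finally show ?thesis .
  qed
  then have "u n j + d < a (Suc n)" using a_Suc s_ge unfolding s_def u_def by simp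
  then have "T (u n j + d) = W (Suc n) ! (u n j + d)" by (rule T_nth_W)
  also have "\<dots> = concat (replicate (r n) (map y [0..<Suc n])) ! (j * Suc n + d)"
    unfolding W_Suc u_def using lt
    by (simp add: nth_append a_def cl_def length_concat sum_list_replicate add.assoc)
  also have "\<dots> = y d"
    using nth_concat_replicate[of j "r n" d "map y [0..<Suc n]"] j d by (simp del: upt_Suc)
  finally show ?thesis .
qed

lemma T_at_copy: "i < a n \<Longrightarrow> T (s n + i) = T i"
proof -
  assume i: "i < a n"
  then have "s n + i < a (Suc n)" using a_Suc by simp
  then have "T (s n + i) = W (Suc n) ! (s n + i)" by (rule T_nth_W)
  also have "\<dots> = W n ! i"
    unfolding W_Suc using i
    by (simp add: nth_append a_def cl_def length_concat sum_list_replicate s_def u_def r_def)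
  also have "\<dots> = T i" using T_nth_W[OF i] by simp
  finally show ?thesis .
qed

lemma T_in:
  assumes "\<And>n. set (C (Suc n)) \<subseteq> S" "set A1 \<subseteq> S" "\<And>i. y i \<in> S"
  shows "T i \<in> S"
proof -
  have "set (W n) \<subseteq> S" for n
    by (induction n) (use assms in \<open>auto simp: W_Suc\<close>)
  moreover have "i < a i" using a_ge_Suc[of i] by simp
  then have "T i \<in> set (W i)" using T_nth_W[of i i] by (simp add: a_def)
  ultimately show ?thesis by blast
qed

lemma real_u: "real (u n j) = real (a n) + real (cl n) + real j * real (Suc n)"
  unfolding u_def by (simp add: algebra_simps)

lemma cyl_visits_T_Y_block:
  assumes "j < r n" "1 \<le> d" "d + M \<le> Suc n"
  shows "u n j + d \<in> cyl_visits T z M \<longleftrightarrow> d \<in> cyl_visits y z M"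
proof -
  have "T (u n j + d + i) = y (d + i)" if "i < M" for i
    using T_at_Y[OF assms(1), of "d + i"] that assms(3) by (simp add: add.assoc)
  then show ?thesis unfolding cyl_visits_def using assms(2) by auto
qed

lemma card_cyl_visits_T_Y_block:
  assumes "j < r n" "hi + M \<le> Suc n"
  shows "card (cyl_visits T z M \<inter> {u n j + lo + 1..u n j + hi}) = card (cyl_visits y z M \<inter> {lo + 1..hi})"
proof -
  have "cyl_visits T z M \<inter> {u n j + lo + 1..u n j + hi} = (+) (u n j) ` (cyl_visits y z M \<inter> {lo + 1..hi})"
  proof (intro equalityI subsetI)
    fix x assume x: "x \<in> cyl_visits T z M \<inter> {u n j + lo + 1..u n j + hi}"
    define d where "d = x - u n j"
    have d: "x = u n j + d" "lo + 1 \<le> d" "d \<le> hi" using x unfolding d_def by auto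
    then have "d \<in> cyl_visits y z M"
      using x cyl_visits_T_Y_block[OF assms(1), of d M z] assms(2) by simp
    with d show "x \<in> (+) (u n j) ` (cyl_visits y z M \<inter> {lo + 1..hi})" by auto
  next
    fix x assume "x \<in> (+) (u n j) ` (cyl_visits y z M \<inter> {lo + 1..hi})"
    then obtain d where d: "x = u n j + d" "d \<in> cyl_visits y z M" "lo + 1 \<le> d" "d \<le> hi" by auto
    then have "x \<in> cyl_visits T z M" using cyl_visits_T_Y_block[OF assms(1), of d M z] assms(2) by simp
    with d show "x \<in> cyl_visits T z M \<inter> {u n j + lo + 1..u n j + hi}" by auto
  qed
  then show ?thesis by (simp add: card_image)
qed

lemma obtain_level:
  assumes "a m0 \<le> t"
  obtains m where "m \<ge> m0" "a m \<le> t" "t < a (Suc m)"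
proof -
  define m' where "m' = (LEAST m. t < a m)"
  have m't: "t < a m'" unfolding m'_def by (rule LeastI[of _ t]) (use a_ge_Suc[of t] in simp)
  have below: "a m \<le> t" if "m < m'" for m
    using not_less_Least[OF that[unfolded m'_def]] by simp
  have "m0 < m'"
  proof (rule ccontr)
    assume "\<not> m0 < m'"
    then have "a m' \<le> a m0" by (simp add: a_mono)
    with m't assms show False by simp
  qed
  then obtain m where "m' = Suc m" "m0 \<le> m" by (cases m') auto
  with m't below that show ?thesis by simp
qed

lemma level_cases:
  assumes "a m \<le> t" "t < a (Suc m)"
  obtains "t < u m 0" | j where "j < r m" "u m j \<le> t" "t < u m (Suc j)" | "s m \<le> t"
proof -
  consider "t < u m 0" | "s m \<le> t" | "u m 0 \<le> t" "t < s m" by linarith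
  then show ?thesis
  proof cases
    case 3
    define j where "j = (t - u m 0) div Suc m"
    have "j * Suc m \<le> t - u m 0"
      unfolding j_def by (rule div_times_less_eq_dividend)
    moreover have "t - u m 0 < Suc m + j * Suc m"
      unfolding j_def by (rule dividend_less_div_times) simp
    ultimately have "u m j \<le> t" "t < u m (Suc j)" using 3(1) unfolding u_def by simp_all
    moreover have "j < r m"
    proof (rule ccontr)
      assume "\<not> j < r m"
      then have "s m \<le> u m j" unfolding s_def u_def using mult_le_mono1[of "r m" j "Suc m"] by linarith
      with \<open>u m j \<le> t\<close> 3(2) show False by simp
    qed
    ultimately show ?thesis using that by blast
  qed (use that in blast)+
qed

text \<open>A window of length \<open>M\<close> starting in \<open>seams M n\<close> runs into the start of a copy
  of \<open>Y\<^sub>n\<^sub>+\<^sub>1\<close> or of the second copy of \<open>A\<^sub>n\<^sub>+\<^sub>1\<close>.\<close>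

definition seams :: "nat \<Rightarrow> nat \<Rightarrow> nat set" where
  "seams M n = {p. \<exists>j\<le>r n. u n j - M \<le> p \<and> p < u n j}"

lemma seams_less_s: "p \<in> seams M n \<Longrightarrow> p < s n"
  unfolding seams_def using u_le_s less_le_trans by blast

lemma seams_ge: "p \<in> seams M n \<Longrightarrow> a n - M \<le> p"
  unfolding seams_def u_def by auto

lemma finite_seams: "finite (seams M n)"
  using seams_less_s by (blast intro: finite_subset[of _ "{..<s n}"])

lemma card_seams: "card (seams M n) \<le> M * Suc (r n)"
proof -
  have "seams M n = (\<Union>j\<in>{..r n}. {u n j - M..<u n j})" unfolding seams_def by auto
  then have "card (seams M n) \<le> (\<Sum>j\<in>{..r n}. card {u n j - M..<u n j})"
    by (simp only:) (rule card_UN_le, simp)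
  also have "\<dots> \<le> (\<Sum>j\<in>{..r n}. M)" by (intro sum_mono) auto
  finally show ?thesis by (simp add: mult.commute)
qed

lemma card_seams_window:
  assumes "lo \<le> hi"
  shows "real (card (seams M n \<inter> {lo..<hi})) * real (Suc n) \<le> real M * (real hi + real M - real lo + real (Suc n))"
proof -
  let ?S = "{j. lo < a n + cl n + j * Suc n \<and> a n + cl n + j * Suc n < hi + M}"
  have sub: "seams M n \<inter> {lo..<hi} \<subseteq> (\<Union>j\<in>?S. {u n j - M..<u n j})"
    unfolding seams_def u_def by force
  have "?S \<subseteq> {..<hi + M}"
  proof
    fix j assume "j \<in> ?S"
    moreover have "j \<le> a n + cl n + j * Suc n" by simp
    ultimately show "j \<in> {..<hi + M}" by simp
  qed
  then have fin: "finite ?S" by (rule finite_subset) simp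
  have "finite (\<Union>j\<in>?S. {u n j - M..<u n j})" by (rule finite_UN_I[OF fin]) simp
  then have "card (seams M n \<inter> {lo..<hi}) \<le> card (\<Union>j\<in>?S. {u n j - M..<u n j})"
    using sub by (rule card_mono)
  also have "\<dots> \<le> (\<Sum>j\<in>?S. card {u n j - M..<u n j})" by (rule card_UN_le[OF fin])
  also have "\<dots> \<le> (\<Sum>j\<in>?S. M)" by (intro sum_mono) auto
  also have "\<dots> = M * card ?S" by simp
  finally have "card (seams M n \<inter> {lo..<hi}) \<le> M * card ?S" .
  then have "real (card (seams M n \<inter> {lo..<hi})) \<le> real M * real (card ?S)"
    by (simp only: of_nat_le_iff flip: of_nat_mult)
  then have "real (card (seams M n \<inter> {lo..<hi})) * real (Suc n) \<le> real M * real (card ?S) * real (Suc n)"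
    by (rule mult_right_mono) simp
  also have "\<dots> = real M * (real (card ?S) * real (Suc n))" by (simp only: mult.assoc)
  also have "\<dots> \<le> real M * (real (hi + M) - real lo + real (Suc n))"
    using card_arith_prog_window[of "Suc n" lo "hi + M" "a n + cl n"] assms by (intro mult_left_mono) auto
  finally show ?thesis by simp
qed

lemma card_seams_window_le:
  assumes "lo \<le> hi" "2 * real M \<le> eps * real (Suc n)"
  shows "real (card (seams M n \<inter> {lo..<hi})) \<le> eps / 2 * (real hi - real lo) + real M * real M + real M"
proof -
  let ?c = "real (card (seams M n \<inter> {lo..<hi}))" and ?d = "real (Suc n)" and ?l = "real hi - real lo"
  have "real M * ?l \<le> eps / 2 * ?l * ?d"
  proof -
    have "0 \<le> (eps * ?d / 2 - real M) * ?l" using assms by (intro mult_nonneg_nonneg) auto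
    moreover have "(eps * ?d / 2 - real M) * ?l = eps / 2 * ?l * ?d - real M * ?l"
      by (simp add: algebra_simps)
    ultimately show ?thesis by linarith
  qed
  moreover have "real M * real M \<le> real M * real M * ?d" by (simp add: mult_le_cancel_left1)
  moreover have "?c * ?d \<le> real M * ?l + real M * real M + real M * ?d"
    using card_seams_window[OF assms(1), of M n] by (simp add: algebra_simps)
  ultimately have "?c * ?d \<le> (eps / 2 * ?l + real M * real M + real M) * ?d"
    by (simp add: distrib_right)
  then show ?thesis by (simp add: mult_le_cancel_right_pos)
qed

lemma card_seams_le:
  assumes e: "2 * real M \<le> eps * real (Suc n)"
  shows "real (card (seams M n)) \<le> eps * (real (s n) - real (a n))"
proof -
  have r1: "real (r n) \<ge> 1" using r_ge_a[of n] a_pos[of n] by simp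
  have "real (card (seams M n)) \<le> real (M * Suc (r n))"
    using card_seams[of M n] by (simp only: of_nat_le_iff)
  also have "\<dots> = real M * (real (r n) + 1)" by (simp add: algebra_simps)
  also have "\<dots> \<le> real M * (2 * real (r n))" using r1 by (intro mult_left_mono) auto
  also have "\<dots> = 2 * real M * real (r n)" by simp
  also have "\<dots> \<le> eps * real (Suc n) * real (r n)" using e r1 by (intro mult_right_mono) auto
  also have "\<dots> \<le> eps * (real (s n) - real (a n))"
  proof -
    have "real (a n + r n * Suc n) \<le> real (s n)"
      using s_ge[of n] by (simp only: of_nat_le_iff)
    then have "real (r n) * real (Suc n) \<le> real (s n) - real (a n)"
      by (simp add: algebra_simps)
    moreover have "eps \<ge> 0"
    proof -
      have "0 \<le> eps * real (Suc n)" using e by (rule order_trans[rotated]) simp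
      then show ?thesis by (simp add: zero_le_mult_iff)
    qed
    ultimately have "eps * (real (r n) * real (Suc n)) \<le> eps * (real (s n) - real (a n))"
      by (rule mult_left_mono)
    then show ?thesis by (simp add: mult_ac)
  qed
  finally show ?thesis .
qed

lemma card_seams_window_charged:
  assumes eps: "0 < eps" "2 * real M \<le> eps * real (Suc n)" and K: "real M * real M + real M \<le> K"
    and window: "lo \<le> hi" "a n < hi" "lo < s n"
  shows "real (card (seams M n \<inter> {max lo (a n)..<min hi (s n)}))
    \<le> eps * (real (min hi (s n)) - real (max lo (a n))) + K * of_bool (a n \<le> lo \<or> hi \<le> s n)"
proof (cases "a n \<le> lo \<or> hi \<le> s n")
  case True
  have len: "max lo (a n) \<le> min hi (s n)" using window a_le_s[of n] by auto
  then have "real (card (seams M n \<inter> {max lo (a n)..<min hi (s n)}))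
      \<le> eps / 2 * (real (min hi (s n)) - real (max lo (a n))) + real M * real M + real M"
    using eps(2) by (rule card_seams_window_le)
  moreover have "eps / 2 * (real (min hi (s n)) - real (max lo (a n)))
      \<le> eps * (real (min hi (s n)) - real (max lo (a n)))"
    using len eps(1) by simp
  ultimately show ?thesis using True K by simp
next
  case False
  have "real (card (seams M n \<inter> {max lo (a n)..<min hi (s n)})) \<le> real (card (seams M n))"
    by (simp add: card_mono finite_seams)
  also have "\<dots> \<le> eps * (real (s n) - real (a n))" using eps(2) by (rule card_seams_le)
  finally show ?thesis using False by simp
qed

context
  fixes B :: "nat \<Rightarrow> nat set" and M :: nat
  assumes B_sub: "B n \<subseteq> {..<a n}"
    and B_end: "{a n - M..<a n} \<subseteq> B n"
    and B_Suc: "B (Suc n) \<subseteq> B n \<union> (+) (s n) ` B n \<union> seams M n"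
begin

lemma finite_B: "finite (B n)"
  using B_sub finite_subset by blast

lemma card_B_le: "card (B n) \<le> a n"
  using card_mono[OF _ B_sub, of n] by simp

lemma card_B_Suc_window_le:
  "card (B (Suc n) \<inter> {lo..<hi}) \<le> card (B n \<inter> {lo..<min hi (a n)})
     + card (seams M n \<inter> {max lo (a n)..<min hi (s n)}) + card (B n \<inter> {lo - s n..<hi - s n})"
proof -
  let ?A = "a n" and ?S = "s n"
  have "B (Suc n) \<inter> {lo..<hi} \<subseteq> (B n \<inter> {lo..<min hi ?A}) \<union> (seams M n \<inter> {max lo ?A..<min hi ?S})
      \<union> (+) ?S ` (B n \<inter> {lo - ?S..<hi - ?S})"
  proof
    fix p assume p: "p \<in> B (Suc n) \<inter> {lo..<hi}"
    consider "p \<in> B n" | "p \<in> seams M n" "p \<notin> B n" | q where "q \<in> B n" "p = ?S + q"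
      using p B_Suc by blast
    then show "p \<in> (B n \<inter> {lo..<min hi ?A}) \<union> (seams M n \<inter> {max lo ?A..<min hi ?S})
      \<union> (+) ?S ` (B n \<inter> {lo - ?S..<hi - ?S})"
    proof cases
      case 1
      then show ?thesis using p B_sub by auto
    next
      case 2
      then have "?A \<le> p" using seams_ge[of p M n] B_end[of n] by (meson atLeastLessThan_iff not_le subsetD)
      then show ?thesis using 2 p seams_less_s[of p M n] by auto
    next
      case 3
      then have "q \<in> B n \<inter> {lo - ?S..<hi - ?S}" using p by auto
      with 3 show ?thesis by blast
    qed
  qed
  then have "card (B (Suc n) \<inter> {lo..<hi}) \<le> card ((B n \<inter> {lo..<min hi ?A})
      \<union> (seams M n \<inter> {max lo ?A..<min hi ?S}) \<union> (+) ?S ` (B n \<inter> {lo - ?S..<hi - ?S}))"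
    by (rule card_mono[rotated]) (simp add: finite_B)
  also have "\<dots> \<le> card (B n \<inter> {lo..<min hi ?A}) + card (seams M n \<inter> {max lo ?A..<min hi ?S})
      + card ((+) ?S ` (B n \<inter> {lo - ?S..<hi - ?S}))"
    by (meson card_Un_le add_le_mono1 order_trans)
  also have "card ((+) ?S ` (B n \<inter> {lo - ?S..<hi - ?S})) = card (B n \<inter> {lo - ?S..<hi - ?S})"
    by (rule card_image) (simp add: inj_on_def)
  finally show ?thesis .
qed

lemma card_B_Suc_le:
  assumes eps: "4 * (real M + 1) \<le> eps * real (Suc n)"
  shows "real (card (B (Suc n))) \<le> eps * real (a (Suc n))"
proof -
  have "0 \<le> eps * real (Suc n)" using eps by (rule order_trans[rotated]) simp
  then have eps0: "eps \<ge> 0" by (simp add: zero_le_mult_iff)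
  have Bn: "card (B n \<inter> X) \<le> card (B n)" for X
    by (rule card_mono[OF finite_B]) auto
  have seams: "card (seams M n \<inter> X) \<le> card (seams M n)" for X
    by (rule card_mono[OF finite_seams]) auto
  have "B (Suc n) = B (Suc n) \<inter> {0..<a (Suc n)}" using B_sub[of "Suc n"] by auto
  then have "card (B (Suc n)) = card (B (Suc n) \<inter> {0..<a (Suc n)})" by simp
  also have "\<dots> \<le> card (B n) + card (seams M n) + card (B n)"
    by (rule order_trans[OF card_B_Suc_window_le]) (intro add_mono Bn seams)
  finally have total: "real (card (B (Suc n))) \<le> 2 * real (a n) + real (card (seams M n))"
    using card_B_le[of n] by linarith
  have "real (card (seams M n)) \<le> eps / 2 * (real (s n) - real (a n))"
    using eps by (intro card_seams_le) simp
  also have "\<dots> \<le> eps / 2 * real (a (Suc n))"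
    using a_Suc[of n] eps0 by (intro mult_left_mono) auto
  finally have seams_le: "real (card (seams M n)) \<le> eps / 2 * real (a (Suc n))" .
  have "a n * Suc n \<le> a (Suc n)"
    using r_ge_a[of n] s_ge[of n] a_Suc[of n] mult_le_mono1[of "a n" "r n" "Suc n"] by linarith
  then have "real (a n) * real (Suc n) \<le> real (a (Suc n))"
    by (metis of_nat_le_iff of_nat_mult)
  then have "eps * (real (a n) * real (Suc n)) \<le> eps * real (a (Suc n))"
    using eps0 by (intro mult_left_mono) auto
  moreover have "4 * real (a n) \<le> eps * real (Suc n) * real (a n)"
    using mult_right_mono[OF order_trans[OF _ eps], of 4 "real (a n)"] by simp
  ultimately have "2 * real (a n) \<le> eps / 2 * real (a (Suc n))"
    by (simp add: algebra_simps)
  with total seams_le show ?thesis by linarith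
qed

lemma real_card_B_Suc_window_le:
  "real (card (B (Suc n) \<inter> {lo..<hi})) \<le> real (card (B n \<inter> {lo..<min hi (a n)}))
     + real (card (seams M n \<inter> {max lo (a n)..<min hi (s n)})) + real (card (B n \<inter> {lo - s n..<hi - s n}))"
  using card_B_Suc_window_le[of n lo hi] by linarith

text \<open>Only window ends that cut into the block are charged the additive constant \<open>K\<close>;
  the block as a whole has \<open>B\<close>-density at most \<open>eps\<close>.\<close>

lemma card_B_Suc_window_middle:
  assumes IH: "\<And>lo hi. lo \<le> hi \<Longrightarrow> hi \<le> a n \<Longrightarrow> real (card (B n \<inter> {lo..<hi}))
      \<le> eps * (real hi - real lo) + K * (of_bool (0 < lo) + of_bool (hi < a n))"
    and eps: "0 < eps" "2 * real M \<le> eps * real (Suc n)"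
    and K: "real M * real M + real M \<le> K"
    and lh: "lo \<le> hi" "hi \<le> a (Suc n)" and middle: "a n < hi" "lo < s n"
  shows "real (card (B (Suc n) \<inter> {lo..<hi}))
      \<le> eps * (real hi - real lo) + K * (of_bool (0 < lo) + of_bool (hi < a (Suc n)))"
proof -
  define A S where "A = a n" and "S = s n"
  have A1: "1 \<le> A" and AS: "A \<le> S" and aSuc: "a (Suc n) = S + A"
    unfolding A_def S_def using a_pos a_le_s a_Suc by auto
  have K0: "0 \<le> K" using K by (metis add_nonneg_nonneg mult_nonneg_nonneg of_nat_0_le_iff order_trans)
  have h1: "real (card (B n \<inter> {lo..<min hi A})) \<le> eps * (real A - real (min lo A)) + K * of_bool (0 < lo \<and> lo < A)"
  proof (cases "lo < A")
    case True
    then show ?thesis using IH[of lo A] middle unfolding A_def by simp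
  qed simp
  have h3: "real (card (B n \<inter> {lo - S..<hi - S})) \<le> eps * (real (max hi S) - real S) + K * of_bool (S < hi \<and> hi < a (Suc n))"
  proof (cases "S < hi")
    case True
    have "hi - S \<le> A" "lo - S = 0" using lh aSuc middle unfolding S_def by simp_all
    then have "real (card (B n \<inter> {lo - S..<hi - S})) \<le> eps * real (hi - S) + K * of_bool (hi - S < A)"
      using IH[of 0 "hi - S"] unfolding A_def by simp
    moreover have "real (hi - S) = real hi - real S" "(hi - S < A) = (hi < a (Suc n))"
      using True aSuc by auto
    ultimately show ?thesis using True by simp
  qed simp
  have "(real A - real (min lo A)) + (real (min hi S) - real (max lo A)) + (real (max hi S) - real S)
      = real hi - real lo"
    using middle AS unfolding A_def S_def by (cases "lo < a n"; cases "hi \<le> s n") auto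
  then have "eps * (real A - real (min lo A)) + eps * (real (min hi S) - real (max lo A))
      + eps * (real (max hi S) - real S) = eps * (real hi - real lo)"
    by (simp only: distrib_left[symmetric])
  moreover have "K * of_bool (0 < lo \<and> lo < A) + K * of_bool (A \<le> lo \<or> hi \<le> S) + K * of_bool (S < hi \<and> hi < a (Suc n))
      \<le> K * (of_bool (0 < lo) + of_bool (hi < a (Suc n)))"
    unfolding distrib_left[symmetric] using A1 AS aSuc K0
    by (intro mult_left_mono) (auto simp: of_bool_def)
  ultimately show ?thesis
    using real_card_B_Suc_window_le[of n lo hi] h1 h3 card_seams_window_charged[OF eps K lh(1) middle]
    unfolding A_def S_def by linarith
qed

lemma card_B_Suc_window_step:
  assumes IH: "\<And>lo hi. lo \<le> hi \<Longrightarrow> hi \<le> a n \<Longrightarrow> real (card (B n \<inter> {lo..<hi}))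
      \<le> eps * (real hi - real lo) + K * (of_bool (0 < lo) + of_bool (hi < a n))"
    and eps: "0 < eps" "2 * real M \<le> eps * real (Suc n)"
    and K: "real M * real M + real M \<le> K"
    and lh: "lo \<le> hi" "hi \<le> a (Suc n)"
  shows "real (card (B (Suc n) \<inter> {lo..<hi}))
      \<le> eps * (real hi - real lo) + K * (of_bool (0 < lo) + of_bool (hi < a (Suc n)))"
proof -
  have K0: "0 \<le> K" using K by (metis add_nonneg_nonneg mult_nonneg_nonneg of_nat_0_le_iff order_trans)
  have aSuc: "a (Suc n) = s n + a n" and As: "1 \<le> a n" "a n \<le> s n" using a_Suc a_pos a_le_s by auto
  consider (left) "hi \<le> a n" | (right) "s n \<le> lo" | (middle) "a n < hi" "lo < s n" by linarith
  then show ?thesis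
  proof cases
    case left
    then have "real (card (B n \<inter> {lo..<hi})) \<le> eps * (real hi - real lo) + K * (of_bool (0 < lo) + of_bool (hi < a n))"
      using IH lh by simp
    moreover have "K * (of_bool (0 < lo) + of_bool (hi < a n)) \<le> K * (of_bool (0 < lo) + of_bool (hi < a (Suc n)))"
      using left aSuc As K0 by (intro mult_left_mono) (auto simp: of_bool_def)
    ultimately show ?thesis using real_card_B_Suc_window_le[of n lo hi] left As by simp
  next
    case right
    have "real (card (B n \<inter> {lo - s n..<hi - s n}))
        \<le> eps * (real (hi - s n) - real (lo - s n)) + K * (of_bool (0 < lo - s n) + of_bool (hi - s n < a n))"
      using IH[of "lo - s n" "hi - s n"] lh aSuc by simp
    moreover have "real (hi - s n) - real (lo - s n) = real hi - real lo" using right lh by simp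
    moreover have "K * (of_bool (0 < lo - s n) + of_bool (hi - s n < a n)) \<le> K * (of_bool (0 < lo) + of_bool (hi < a (Suc n)))"
      using right lh aSuc K0 by (intro mult_left_mono) (auto simp: of_bool_def)
    ultimately show ?thesis using real_card_B_Suc_window_le[of n lo hi] right As by simp
  next
    case middle
    with card_B_Suc_window_middle[OF IH eps K lh] show ?thesis by blast
  qed
qed

lemma card_B_Int_le: "card (B n \<inter> X) \<le> a n"
  using card_mono[OF finite_B, of "B n \<inter> X" n] card_B_le[of n] by simp

lemma card_B_window_le_charged:
  assumes eps: "0 < eps" and large: "\<And>n. N \<le> n \<Longrightarrow> 4 * (real M + 1) \<le> eps * real (Suc n)"
    and K: "real M * real M + real M \<le> K" "real (a (Suc N)) \<le> K"
    and "Suc N \<le> n" "lo \<le> hi" "hi \<le> a n"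
  shows "real (card (B n \<inter> {lo..<hi})) \<le> eps * (real hi - real lo) + K * (of_bool (0 < lo) + of_bool (hi < a n))"
  using assms(5-)
proof (induction n arbitrary: lo hi rule: nat_induct_at_least)
  case base
  show ?case
  proof (cases "0 < lo \<or> hi < a (Suc N)")
    case True
    have "0 \<le> K" using K(2) by linarith
    with True have "K \<le> K * (of_bool (0 < lo) + of_bool (hi < a (Suc N)))"
      by (auto simp: of_bool_def)
    moreover have "real (card (B (Suc N) \<inter> {lo..<hi})) \<le> K"
      using card_B_Int_le[of "Suc N"] K(2) by (meson of_nat_le_iff order_trans)
    moreover have "0 \<le> eps * (real hi - real lo)" using eps base by simp
    ultimately show ?thesis by linarith
  next
    case False
    then have "B (Suc N) \<inter> {lo..<hi} = B (Suc N)" "lo = 0" "hi = a (Suc N)"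
      using base B_sub[of "Suc N"] by auto
    then show ?thesis using card_B_Suc_le[OF large[of N]] by simp
  qed
next
  case (Suc n)
  show ?case
  proof (rule card_B_Suc_window_step[OF Suc.IH eps _ K(1) Suc.prems])
    show "2 * real M \<le> eps * real (Suc n)" using large[of n] Suc.hyps by simp
  qed
qed

lemma card_B_window_le:
  assumes eps: "eps > 0"
  obtains K where "\<And>n lo hi. lo \<le> hi \<Longrightarrow> real (card (B n \<inter> {lo..<hi})) \<le> eps * (real hi - real lo) + K"
proof -
  obtain N :: nat where N: "4 * (real M + 1) / eps < real N" using reals_Archimedean2 by blast
  have large: "4 * (real M + 1) \<le> eps * real (Suc n)" if "N \<le> n" for n
  proof -
    have "4 * (real M + 1) < eps * real N" using N eps by (simp add: field_simps)
    also have "\<dots> \<le> eps * real (Suc n)" using that eps by simp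
    finally show ?thesis by simp
  qed
  define K where "K = real (a (Suc N)) + real M * real M + real M"
  have K: "real M * real M + real M \<le> K" "real (a (Suc N)) \<le> K" "0 \<le> K" unfolding K_def by simp_all
  show ?thesis
  proof (rule that)
    fix n lo hi :: nat assume lh: "lo \<le> hi"
    show "real (card (B n \<inter> {lo..<hi})) \<le> eps * (real hi - real lo) + 2 * K"
    proof (cases "n \<le> Suc N")
      case True
      then have "real (card (B n \<inter> {lo..<hi})) \<le> K"
        using card_B_Int_le[of n] a_mono[OF True] K(2) by (meson of_nat_le_iff order_trans)
      then show ?thesis using eps lh K(3) by (simp add: add_increasing)
    next
      case False
      define hi' lo' where "hi' = min hi (a n)" and "lo' = min lo hi'"
      have "B n \<inter> {lo..<hi} \<subseteq> B n \<inter> {lo'..<hi'}"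
        using B_sub[of n] unfolding lo'_def hi'_def by auto
      then have "real (card (B n \<inter> {lo..<hi})) \<le> real (card (B n \<inter> {lo'..<hi'}))"
        by (simp add: card_mono finite_B)
      also have "\<dots> \<le> eps * (real hi' - real lo') + K * (of_bool (0 < lo') + of_bool (hi' < a n))"
        using False by (intro card_B_window_le_charged[OF eps large K(1,2)]) (auto simp: lo'_def hi'_def)
      also have "\<dots> \<le> eps * (real hi - real lo) + 2 * K"
      proof (rule add_mono)
        show "eps * (real hi' - real lo') \<le> eps * (real hi - real lo)"
          using eps lh unfolding lo'_def hi'_def by (intro mult_left_mono) auto
        show "K * (of_bool (0 < lo') + of_bool (hi' < a n)) \<le> 2 * K"
          using K(3) by (auto simp: of_bool_def)
      qed
      finally show ?thesis .
    qed
  qed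
qed

end

end

section \<open>Runs in \<open>T(y)\<close> occur with zero Banach density\<close>

locale tmap_PiL = tmap_construction C A1 y for C A1 y +
  fixes k L :: nat
  assumes k_ge: "k \<ge> 2" and L_ge: "L \<ge> 3"
    and C_enum: "{C n | n. n \<ge> 1} = {w. contained (PiL k L) w}"
    and A1_range: "set A1 \<subseteq> {..<k}" and A1_not_contained: "\<not> contained (PiL k L) A1"
    and C_short: "(\<lambda>m. real (cl m) / real (a m)) \<longlonglongrightarrow> 0"
    and y_Trans: "y \<in> Trans (PiL k L)"
begin

lemma y_PiL: "y \<in> PiL k L"
  using y_Trans unfolding Trans_def by auto

lemma omega_lim_y: "omega_lim (PiL k L) y = PiL k L"
  using y_Trans unfolding Trans_def by auto

lemma C_contained: "n \<ge> 1 \<Longrightarrow> contained (PiL k L) (C n)"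
  using C_enum by blast

lemma T_FullShift: "T \<in> FullShift k"
proof -
  have "T i \<in> {..<k}" for i
  proof (rule T_in)
    show "set (C (Suc n)) \<subseteq> {..<k}" for n
      using contained_nth_less[OF C_contained[of "Suc n"]] by (auto simp: in_set_conv_nth)
    show "y i \<in> {..<k}" for i using y_PiL unfolding PiL_def FullShift_def by auto
  qed (rule A1_range)
  then show ?thesis unfolding FullShift_def by auto
qed

lemma T_notin_PiL: "T \<notin> PiL k L"
  using A1_not_contained T_nth_A1 unfolding contained_def by auto

definition run_windows :: "nat \<Rightarrow> nat set" where
  "run_windows M = {p. \<exists>i. i + L \<le> M \<and> (\<forall>t<L. T (p + i + t) = T (p + i))}"

text \<open>Neither \<open>C\<^sub>n\<^sub>+\<^sub>1\<close> nor \<open>Y\<^sub>n\<^sub>+\<^sub>1\<close> contains a run of length \<open>L\<close>, so a run window starting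
  in the middle part of \<open>W (Suc n)\<close> must cross a seam.\<close>

lemma run_window_in_seams:
  assumes p: "p \<in> run_windows M" "a n \<le> p" "p < s n"
  shows "p \<in> seams M n"
proof (rule ccontr)
  assume "p \<notin> seams M n"
  have far: "p + M < u n j" if "j \<le> r n" "p < u n j" for j
  proof -
    have "\<not> u n j - M \<le> p" using that \<open>p \<notin> seams M n\<close> unfolding seams_def by auto
    then show ?thesis by simp
  qed
  obtain i where i: "i + L \<le> M" "\<And>t. t < L \<Longrightarrow> T (p + i + t) = T (p + i)"
    using p(1) unfolding run_windows_def by auto
  have "p < a (Suc n)" using p(3) a_Suc[of n] by simp
  with p(2) show False
  proof (cases rule: level_cases)
    case 1
    define m where "m = p - a n + i"
    have len: "m + L \<le> length (C (Suc n))"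
      using far[of 0] 1 p(2) i(1) unfolding m_def u_def cl_def by simp
    have "C (Suc n) ! (m + t) = C (Suc n) ! m" if "t < L" for t
    proof -
      have "T (a n + (m + t)) = C (Suc n) ! (m + t)" "T (a n + m) = C (Suc n) ! m"
        using len that by (auto intro!: T_at_C simp: cl_def)
      moreover have "a n + (m + t) = p + i + t" "a n + m = p + i" using p(2) unfolding m_def by auto
      ultimately show ?thesis using i(2)[OF that] by metis
    qed
    then show False using contained_no_run[OF C_contained len] by simp
  next
    case (2 j)
    define m where "m = p - u n j + i"
    have len: "m + L \<le> Suc n"
      using far[of "Suc j"] 2 i(1) unfolding m_def u_Suc by simp
    have "y (m + t) = y m" if "t < L" for t
    proof -
      have "T (u n j + (m + t)) = y (m + t)" "T (u n j + m) = y m"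
        using len that 2(1) by (auto intro!: T_at_Y)
      moreover have "u n j + (m + t) = p + i + t" "u n j + m = p + i" using 2(2) unfolding m_def by auto
      ultimately show ?thesis using i(2)[OF that] by metis
    qed
    then show False using PiL_no_run[OF y_PiL] by blast
  next
    case 3
    with p(3) show False by simp
  qed
qed

lemma run_window_of_copy:
  assumes "q + M \<le> a n" "s n + q \<in> run_windows M"
  shows "q \<in> run_windows M"
proof -
  obtain i where i: "i + L \<le> M" "\<And>t. t < L \<Longrightarrow> T (s n + q + i + t) = T (s n + q + i)"
    using assms(2) unfolding run_windows_def by auto
  have "T (q + i + t) = T (q + i)" if "t < L" for t
    using i(2)[OF that] T_at_copy[of "q + i + t" n] T_at_copy[of "q + i" n] assms(1) i(1) that
    by (simp add: add.assoc)
  with i(1) show ?thesis unfolding run_windows_def by auto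
qed

definition run_windows_upto :: "nat \<Rightarrow> nat \<Rightarrow> nat set" where
  "run_windows_upto M n = {p. p < a n \<and> p \<in> run_windows M} \<union> {a n - M..<a n}"

lemma run_windows_upto_Suc:
  "run_windows_upto M (Suc n) \<subseteq> run_windows_upto M n \<union> (+) (s n) ` run_windows_upto M n \<union> seams M n"
proof
  fix p assume p: "p \<in> run_windows_upto M (Suc n)"
  have aSuc: "a (Suc n) = s n + a n" by (rule a_Suc)
  consider "p < a n" | "a n \<le> p" "p < s n" | "s n \<le> p" by linarith
  then show "p \<in> run_windows_upto M n \<union> (+) (s n) ` run_windows_upto M n \<union> seams M n"
  proof cases
    case 1
    then show ?thesis using p a_mono[of n "Suc n"] unfolding run_windows_upto_def by auto
  next
    case 2
    show ?thesis
    proof (cases "p \<in> run_windows M")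
      case True
      with 2 show ?thesis using run_window_in_seams by blast
    next
      case False
      then have "s n - M \<le> p" using p aSuc unfolding run_windows_upto_def by auto
      with 2 have "p \<in> seams M n" unfolding seams_def s_def by auto
      then show ?thesis by simp
    qed
  next
    case 3
    define q where "q = p - s n"
    have pq: "p = s n + q" and qa: "q < a n"
      using 3 p aSuc unfolding q_def run_windows_upto_def by auto
    have "q \<in> run_windows_upto M n"
    proof (cases "a n - M \<le> q")
      case False
      then have "p \<in> run_windows M" using p pq aSuc unfolding run_windows_upto_def by auto
      then have "q \<in> run_windows M" using False pq run_window_of_copy[of q M n] by simp
      with qa show ?thesis unfolding run_windows_upto_def by simp
    qed (use qa in \<open>simp add: run_windows_upto_def\<close>)
    with pq show ?thesis by blast
  qed
qed

lemma card_run_windows_le: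
  assumes "eps > 0"
  obtains K where "\<And>lo hi. lo \<le> hi \<Longrightarrow> real (card (run_windows M \<inter> {lo..<hi})) \<le> eps * (real hi - real lo) + K"
proof -
  have "run_windows_upto M n \<subseteq> {..<a n}" "{a n - M..<a n} \<subseteq> run_windows_upto M n" for n
    unfolding run_windows_upto_def by auto
  then obtain K where K: "\<And>n lo hi. lo \<le> hi \<Longrightarrow>
      real (card (run_windows_upto M n \<inter> {lo..<hi})) \<le> eps * (real hi - real lo) + K"
    using card_B_window_le[of "run_windows_upto M" M, OF _ _ run_windows_upto_Suc assms] by blast
  show ?thesis
  proof (rule that)
    fix lo hi :: nat assume "lo \<le> hi"
    have "hi \<le> a hi" using a_ge_Suc[of hi] by simp
    then have "run_windows M \<inter> {lo..<hi} \<subseteq> run_windows_upto M hi \<inter> {lo..<hi}"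
      unfolding run_windows_upto_def by auto
    then have "card (run_windows M \<inter> {lo..<hi}) \<le> card (run_windows_upto M hi \<inter> {lo..<hi})"
      by (rule card_mono[rotated]) simp
    then show "real (card (run_windows M \<inter> {lo..<hi})) \<le> eps * (real hi - real lo) + K"
      using K[OF \<open>lo \<le> hi\<close>, of hi] by linarith
  qed
qed

lemma not_banach_upper_run_windows_pos: "\<not> banach_upper (run_windows M) > 0"
proof
  assume "banach_upper (run_windows M) > 0"
  then obtain g where g: "g > 0" "\<And>l. l \<ge> 1 \<Longrightarrow> g * real l \<le> real (max_window (run_windows M) l)"
    unfolding banach_upper_pos_iff by auto
  obtain K where K: "\<And>lo hi. lo \<le> hi \<Longrightarrow> real (card (run_windows M \<inter> {lo..<hi})) \<le> g / 2 * (real hi - real lo) + K"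
    using card_run_windows_le[of "g / 2" M] g(1) by auto
  obtain l :: nat where l: "max 1 (2 * K / g) < real l" using reals_Archimedean2 by blast
  obtain q where q: "max_window (run_windows M) l = card (run_windows M \<inter> {q+1..q+l})"
    using max_window_attained by blast
  have "run_windows M \<inter> {q+1..q+l} = run_windows M \<inter> {q+1..<q+1+l}" by auto
  then have "real (max_window (run_windows M) l) \<le> g / 2 * real l + K" using q K[of "q+1" "q+1+l"] by simp
  moreover have "g * real l \<le> real (max_window (run_windows M) l)" using g(2) l by simp
  ultimately have "real l \<le> 2 * K / g" using g(1) by (simp add: field_simps)
  with l show False by simp
qed

lemma cyl_visits_T_subset_run_windows:
  assumes "z \<notin> PiL k L" "z \<in> FullShift k"
  obtains M where "cyl_visits T z M \<subseteq> run_windows M"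
proof -
  obtain n0 where n0: "\<forall>j<L. z (n0 + j) = z n0" using assms unfolding PiL_def by auto
  have "cyl_visits T z (n0 + L) \<subseteq> run_windows (n0 + L)"
  proof
    fix p assume "p \<in> cyl_visits T z (n0 + L)"
    then have pz: "T (p + i) = z i" if "i < n0 + L" for i using that unfolding cyl_visits_def by auto
    have "T (p + n0 + t) = T (p + n0)" if "t < L" for t
    proof -
      have "T (p + (n0 + t)) = z (n0 + t)" "T (p + n0) = z n0" using pz that by simp_all
      then show ?thesis using n0 that by (simp add: add.assoc)
    qed
    then show "p \<in> run_windows (n0 + L)" unfolding run_windows_def by auto
  qed
  then show ?thesis by (rule that)
qed

lemma T_in_omega_lim: "T \<in> omega_lim (FullShift k) T"
  unfolding omega_lim_def
proof (safe)
  show "T \<in> FullShift k" by (rule T_FullShift)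
  fix e :: real assume "e > 0" "finite (visits T (sball (FullShift k) T e))"
  obtain m where "(1/2::real) ^ m < e" using real_arch_pow_inv[OF \<open>e > 0\<close>, of "1/2"] by auto
  then have sub: "cyl_visits T T (Suc m) \<subseteq> visits T (sball (FullShift k) T e)"
    by (intro cyl_visits_subset_visits_sball funpow_shift_FullShift T_FullShift) simp
  have "\<exists>p\<ge>N. p \<in> cyl_visits T T (Suc m)" for N
  proof (intro exI conjI)
    define n where "n = max N (Suc m)"
    show "N \<le> s n" using s_ge_index[of N n] unfolding n_def by simp
    have "Suc m \<le> a n" using a_ge_Suc[of n] unfolding n_def by simp
    then show "s n \<in> cyl_visits T T (Suc m)"
      using T_at_copy a_pos[of n] a_le_s[of n] unfolding cyl_visits_def by auto
  qed
  then have "infinite (cyl_visits T T (Suc m))" by (simp add: infinite_nat_iff_unbounded_le)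
  with sub \<open>finite (visits T (sball (FullShift k) T e))\<close> show False
    using finite_subset by blast
qed

end

section \<open>Densities of cylinder visits of \<open>y\<close> and of \<open>T(y)\<close>\<close>

context tmap_PiL
begin

lemma eventually_cl_le:
  assumes "0 < d"
  shows "\<forall>\<^sub>F m in sequentially. real (cl m) \<le> d * real (a m)"
proof -
  have "\<forall>\<^sub>F m in sequentially. real (cl m) / real (a m) < d"
    using order_tendstoD(2)[OF C_short assms] .
  then show ?thesis
  proof (rule eventually_mono)
    fix m assume "real (cl m) / real (a m) < d"
    then show "real (cl m) \<le> d * real (a m)" using a_pos[of m] by (simp add: divide_less_eq)
  qed
qed

context
  fixes z :: "nat \<Rightarrow> nat" and M :: nat
begin

abbreviation cT :: "nat \<Rightarrow> real" where "cT t \<equiv> real (count_upto (cyl_visits T z M) t)"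
abbreviation cY :: "nat \<Rightarrow> real" where "cY t \<equiv> real (count_upto (cyl_visits y z M) t)"

lemma Y_block_count:
  assumes "j < r n"
  shows "\<bar>cT (u n (Suc j)) - cT (u n j) - cY (Suc n)\<bar> \<le> real M"
proof -
  define q where "q = Suc n - M"
  define VT VY where "VT = cyl_visits T z M" and "VY = cyl_visits y z M"
  have q: "q \<le> Suc n" "Suc n - q \<le> M" "q + M \<le> Suc n \<or> q = 0" unfolding q_def by auto
  have "count_upto VT (u n (Suc j)) = count_upto VT (u n j + q) + card (VT \<inter> {u n j + q + 1..u n j + q + (Suc n - q)})"
    using count_upto_add[of VT "u n j + q" "Suc n - q"] q(1) by (simp add: u_Suc)
  moreover have "count_upto VT (u n j + q) = count_upto VT (u n j) + card (VT \<inter> {u n j + 0 + 1..u n j + q})"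
    using count_upto_add[of VT "u n j" q] by simp
  moreover have "card (VT \<inter> {u n j + 0 + 1..u n j + q}) = count_upto VY q"
  proof (cases "q = 0")
    case False
    then show ?thesis unfolding VT_def VY_def count_upto_def
      using card_cyl_visits_T_Y_block[OF assms, of q M z 0] q(3) by simp
  qed (simp add: count_upto_def)
  moreover have "count_upto VY (Suc n) = count_upto VY q + card (VY \<inter> {q + 1..q + (Suc n - q)})"
    using count_upto_add[of VY q "Suc n - q"] q(1) by simp
  moreover have "card (VT \<inter> {u n j + q + 1..u n j + q + (Suc n - q)}) \<le> M"
    "card (VY \<inter> {q + 1..q + (Suc n - q)}) \<le> M"
    using card_window_le q(2) order_trans by blast+
  ultimately show ?thesis unfolding VT_def VY_def by (simp add: abs_le_iff)
qed

lemma Y_blocks_count: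
  assumes "j \<le> r n"
  shows "\<bar>cT (u n j) - cT (u n 0) - real j * cY (Suc n)\<bar> \<le> real j * real M"
  using assms
proof (induction j)
  case (Suc j)
  then have "\<bar>cT (u n j) - cT (u n 0) - real j * cY (Suc n)\<bar> \<le> real j * real M"
    "\<bar>cT (u n (Suc j)) - cT (u n j) - cY (Suc n)\<bar> \<le> real M"
    using Y_block_count[of j n] by simp_all
  then show ?case by (simp add: abs_le_iff algebra_simps)
qed simp

lemma count_T_lower_Y_blocks:
  assumes "j \<le> r n"
  shows "cT (a n) + real j * (cY (Suc n) - real M) \<le> cT (u n j)"
proof -
  have "cT (a n) \<le> cT (u n 0)" by (rule real_count_upto_mono) (simp add: u_def)
  with Y_blocks_count[OF assms] show ?thesis by (simp add: abs_le_iff algebra_simps)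
qed

lemma count_T_upper_Y_blocks:
  assumes "j \<le> r n"
  shows "cT (u n j) \<le> cT (a n) + real (cl n) + real j * (cY (Suc n) + real M)"
proof -
  have "cT (u n 0) \<le> cT (a n) + real (cl n)"
    using real_count_upto_add_le[of _ "a n" "cl n"] by (simp add: u_def)
  with Y_blocks_count[OF assms] show ?thesis by (simp add: abs_le_iff algebra_simps)
qed

lemma count_T_lower_level_end:
  assumes "0 < g" "g * real (Suc m) \<le> cY (Suc m) - real M" "real (cl m) \<le> real (a m)"
  shows "g / 4 * real (a (Suc m)) \<le> cT (a (Suc m))"
proof -
  have "real (r m) * (g * real (Suc m)) \<le> real (r m) * (cY (Suc m) - real M)"
    using assms(2) by (intro mult_left_mono) auto
  also have "\<dots> \<le> cT (s m)"
    using count_T_lower_Y_blocks[of "r m" m] unfolding s_def by simp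
  also have "\<dots> \<le> cT (a (Suc m))" by (rule real_count_upto_mono) (simp add: a_Suc)
  finally have "g * (real (r m) * real (Suc m)) \<le> cT (a (Suc m))" by (simp add: algebra_simps)
  moreover have "real (a (Suc m)) \<le> 4 * (real (r m) * real (Suc m))"
  proof -
    have "real (a m) \<le> real (r m)" using r_ge_a[of m] by simp
    moreover have "real (r m) \<le> real (r m) * real (Suc m)" by (simp add: mult_le_cancel_left1)
    moreover have "real (a (Suc m)) = real (s m) + real (a m)" using a_Suc[of m] by simp
    moreover have "real (s m) = real (a m) + real (cl m) + real (r m) * real (Suc m)"
      using real_u[of m "r m"] unfolding s_def .
    ultimately show ?thesis using assms(3) by linarith
  qed
  then have "g / 4 * real (a (Suc m)) \<le> g / 4 * (4 * (real (r m) * real (Suc m)))"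
    using assms(1) by (intro mult_left_mono) auto
  ultimately show ?thesis by simp
qed

lemma count_T_lower_in_level:
  assumes "0 < g" "g * real (Suc m) \<le> cY (Suc m) - real M" "real (cl m) \<le> real (a m)"
    and "g * real (a m) \<le> cT (a m)" and t: "a m \<le> t" "t < a (Suc m)"
  shows "g / 3 * real t \<le> cT t"
proof -
  have blocks: "g * (real (a m) + real j * real (Suc m)) \<le> cT t" if "j \<le> r m" "u m j \<le> t" for j
  proof -
    have "real j * (g * real (Suc m)) \<le> real j * (cY (Suc m) - real M)"
      using assms(2) by (intro mult_left_mono) auto
    moreover have "cT (u m j) \<le> cT t" using that(2) by (rule real_count_upto_mono)
    ultimately show ?thesis using count_T_lower_Y_blocks[OF that(1)] assms(4) by (simp add: algebra_simps)
  qed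
  have Suc_le: "real (Suc m) \<le> real (a m)" using a_ge_Suc[of m] by linarith
  have "\<exists>X. g * X \<le> cT t \<and> real t \<le> 3 * X"
    using t
  proof (cases rule: level_cases)
    case 1
    then have "real t \<le> 3 * real (a m)" using real_u[of m 0] assms(3) by simp
    moreover have "cT (a m) \<le> cT t" using t(1) by (rule real_count_upto_mono)
    ultimately show ?thesis using assms(4) by force
  next
    case (2 j)
    define X where "X = real j * real (Suc m)"
    have "real t < real (u m (Suc j))" using 2 by simp
    also have "\<dots> = real (a m) + real (cl m) + X + real (Suc m)"
      unfolding X_def real_u by (simp add: algebra_simps)
    finally have "real t < real (a m) + real (cl m) + X + real (Suc m)" .
    moreover have "0 \<le> X" unfolding X_def by simp
    ultimately have "real t \<le> 3 * real (a m) + 3 * X" using assms(3) Suc_le by linarith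
    then have "real t \<le> 3 * (real (a m) + X)" by simp
    with blocks[OF less_imp_le[OF 2(1)] 2(2)] show ?thesis unfolding X_def by blast
  next
    case 3
    have "real t < real (a (Suc m))" using t(2) by simp
    moreover have "real (a (Suc m)) = real (a m) + real (cl m) + real (r m) * real (Suc m) + real (a m)"
      using a_Suc[of m] real_u[of m "r m"] unfolding s_def by simp
    moreover have "0 \<le> real (r m) * real (Suc m)" by simp
    ultimately have "real t \<le> 3 * real (a m) + 3 * (real (r m) * real (Suc m))"
      using assms(3) by linarith
    then have "real t \<le> 3 * (real (a m) + real (r m) * real (Suc m))" by simp
    with blocks[of "r m"] 3 show ?thesis unfolding s_def by force
  qed
  then obtain X where X: "g * X \<le> cT t" "real t \<le> 3 * X" by blast
  have "g / 3 * real t \<le> g / 3 * (3 * X)" using X(2) assms(1) by (intro mult_left_mono) auto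
  with X(1) show ?thesis by simp
qed

lemma lower_dens_T_pos_if_y:
  assumes "lower_dens (cyl_visits y z M) > 0"
  shows "lower_dens (cyl_visits T z M) > 0"
proof -
  obtain g where g: "g > 0" "\<forall>\<^sub>F n in sequentially. g * real n \<le> cY n"
    using assms unfolding lower_dens_pos_iff by blast
  have "\<forall>\<^sub>F m in sequentially. g * real (Suc m) \<le> cY (Suc m)"
    using eventually_sequentially_Suc[THEN iffD2, OF g(2)] .
  moreover have "\<forall>\<^sub>F m in sequentially. 2 * real M \<le> g * real (Suc m)"
    using eventually_sequentially_Suc[THEN iffD2, OF eventually_le_mult_real[OF g(1)]] .
  moreover have "\<forall>\<^sub>F m in sequentially. real (cl m) \<le> 1 * real (a m)"
    by (rule eventually_cl_le) simp
  ultimately have "\<forall>\<^sub>F m in sequentially. g * real (Suc m) \<le> cY (Suc m) \<and>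
      2 * real M \<le> g * real (Suc m) \<and> real (cl m) \<le> 1 * real (a m)"
    by (intro eventually_conj)
  then obtain m1 where m1: "\<And>m. m \<ge> m1 \<Longrightarrow> g * real (Suc m) \<le> cY (Suc m) \<and>
      2 * real M \<le> g * real (Suc m) \<and> real (cl m) \<le> 1 * real (a m)"
    unfolding eventually_sequentially by blast
  have level_end: "g / 8 * real (a (Suc m)) \<le> cT (a (Suc m))" if "m \<ge> m1" for m
    using count_T_lower_level_end[of "g / 2" m] m1[OF that] g(1) by linarith
  have "g / 24 * real t \<le> cT t" if t: "a (Suc m1) \<le> t" for t
  proof -
    obtain m where m: "Suc m1 \<le> m" "a m \<le> t" "t < a (Suc m)" using obtain_level[OF t] .
    then obtain m' where "m = Suc m'" "m1 \<le> m'" by (cases m) auto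
    then have "g / 8 * real (a m) \<le> cT (a m)" using level_end by simp
    moreover have "g / 8 * real (Suc m) \<le> cY (Suc m) - real M" "real (cl m) \<le> real (a m)"
      using m1[of m] m(1) g(1) by (auto simp: field_simps)
    ultimately show ?thesis using count_T_lower_in_level[of "g / 8" m t] m(2,3) g(1) by simp
  qed
  then have "\<forall>\<^sub>F t in sequentially. g / 24 * real t \<le> cT t"
    unfolding eventually_sequentially by blast
  with g(1) show ?thesis unfolding lower_dens_pos_iff by (intro exI[of _ "g / 24"]) simp
qed

lemma lower_dens_y_pos_if_T:
  assumes "lower_dens (cyl_visits T z M) > 0"
  shows "lower_dens (cyl_visits y z M) > 0"
proof -
  obtain g where g: "g > 0" "\<forall>\<^sub>F n in sequentially. g * real n \<le> cT n"
    using assms unfolding lower_dens_pos_iff by blast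
  have key: "g * real (Suc m) \<le> cY (Suc m) + real M + 2"
    if m: "g * real (s m) \<le> cT (s m)" "real (cl m) \<le> real (a m)" for m
  proof -
    have r: "real (a m) \<le> real (r m)" "0 < real (r m)" using r_ge_a[of m] a_pos[of m] by auto
    have "r m * Suc m \<le> s m" using s_ge[of m] by simp
    then have "real (r m) * real (Suc m) \<le> real (s m)" by (metis of_nat_le_iff of_nat_mult)
    then have "g * (real (r m) * real (Suc m)) \<le> g * real (s m)"
      using g(1) by (intro mult_left_mono) simp_all
    also have "\<dots> \<le> cT (a m) + real (cl m) + real (r m) * (cY (Suc m) + real M)"
      using m(1) count_T_upper_Y_blocks[of "r m" m] unfolding s_def by simp
    also have "\<dots> \<le> real (r m) * (cY (Suc m) + real M) + 2 * real (r m)"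
      using real_count_upto_le[of "cyl_visits T z M" "a m"] m(2) r(1) by linarith
    also have "\<dots> = real (r m) * (cY (Suc m) + real M + 2)" by (simp add: algebra_simps)
    finally have "real (r m) * (g * real (Suc m)) \<le> real (r m) * (cY (Suc m) + real M + 2)"
      by (simp add: mult.left_commute)
    then show ?thesis by (metis mult_le_cancel_left_pos r(2))
  qed
  obtain N where N: "\<And>n. n \<ge> N \<Longrightarrow> g * real n \<le> cT n"
    using g(2) unfolding eventually_sequentially by blast
  have "\<forall>\<^sub>F m in sequentially. N \<le> m" by simp
  moreover have "\<forall>\<^sub>F m in sequentially. real (cl m) \<le> 1 * real (a m)"
    by (rule eventually_cl_le) simp
  moreover have "\<forall>\<^sub>F m in sequentially. real M + 2 \<le> g / 2 * real (Suc m)"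
    using eventually_sequentially_Suc[THEN iffD2, OF eventually_le_mult_real[of "g / 2" "real M + 2"]] g(1)
    by simp
  ultimately have "\<forall>\<^sub>F m in sequentially. g / 2 * real (Suc m) \<le> cY (Suc m)"
  proof (eventually_elim)
    case (elim m)
    then have "g * real (Suc m) \<le> cY (Suc m) + real M + 2"
      using key N[of "s m"] s_ge_index[of N m] by simp
    with elim(3) show ?case by simp
  qed
  then have "\<forall>\<^sub>F n in sequentially. g / 2 * real n \<le> cY n"
    by (rule eventually_sequentially_Suc[THEN iffD1])
  with g(1) show ?thesis unfolding lower_dens_pos_iff by (intro exI[of _ "g / 2"]) simp
qed

lemma upper_dens_T_pos_if_y:
  assumes "upper_dens (cyl_visits y z M) > 0"
  shows "upper_dens (cyl_visits T z M) > 0"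
proof -
  obtain g where g: "g > 0" "\<exists>\<^sub>F n in sequentially. g * real n \<le> cY n"
    using assms unfolding upper_dens_pos_iff by blast
  have key: "g / 4 * real (s m) \<le> cT (s m)"
    if m: "g * real (Suc m) \<le> cY (Suc m)" "real (cl m) \<le> real (a m)" "g / 2 + real M \<le> 3 * g / 4 * real (Suc m)"
    for m
  proof -
    have r: "real (a m) \<le> real (r m)" using r_ge_a[of m] by simp
    have "g / 4 * real (s m) \<le> g / 4 * (2 * real (r m) + real (r m) * real (Suc m))"
      using real_u[of m "r m"] m(2) r g(1) unfolding s_def by (intro mult_left_mono) auto
    also have "\<dots> = real (r m) * (g / 2 + g / 4 * real (Suc m))" by (simp add: field_simps)
    also have "\<dots> \<le> real (r m) * (cY (Suc m) - real M)"
      using m(1,3) by (intro mult_left_mono) auto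
    also have "\<dots> \<le> cT (s m)"
      using count_T_lower_Y_blocks[of "r m" m] unfolding s_def by simp
    finally show ?thesis .
  qed
  have "\<forall>\<^sub>F m in sequentially. real (cl m) \<le> 1 * real (a m)"
    by (rule eventually_cl_le) simp
  moreover have "\<forall>\<^sub>F m in sequentially. g / 2 + real M \<le> 3 * g / 4 * real (Suc m)"
    using eventually_sequentially_Suc[THEN iffD2, OF eventually_le_mult_real[of "3 * g / 4" "g / 2 + real M"]] g(1)
    by simp
  ultimately have "\<forall>\<^sub>F m in sequentially. real (cl m) \<le> 1 * real (a m) \<and> g / 2 + real M \<le> 3 * g / 4 * real (Suc m)"
    by (rule eventually_conj)
  then obtain m1 where m1: "\<And>m. m \<ge> m1 \<Longrightarrow> real (cl m) \<le> real (a m) \<and> g / 2 + real M \<le> 3 * g / 4 * real (Suc m)"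
    unfolding eventually_sequentially by auto
  have "\<exists>t\<ge>N. g / 4 * real t \<le> cT t" for N
  proof -
    obtain n where n: "n \<ge> Suc (max N m1)" "g * real n \<le> cY n"
      using g(2) unfolding frequently_sequentially by blast
    then obtain m where "n = Suc m" "m \<ge> N" "m \<ge> m1" by (cases n) auto
    with n m1[of m] key[of m] s_ge_index[of N m] show ?thesis by auto
  qed
  then have "\<exists>\<^sub>F t in sequentially. g / 4 * real t \<le> cT t" unfolding frequently_sequentially by blast
  with g(1) show ?thesis unfolding upper_dens_pos_iff by (intro exI[of _ "g / 4"]) simp
qed

lemma count_T_upper_level_end:
  assumes "cY (Suc m) + real M \<le> G * real (Suc m)" "real (cl m) \<le> G * real (a m)"
    and "1 \<le> G * real (Suc m)"
  shows "cT (a (Suc m)) \<le> 4 * G * real (a (Suc m))"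
proof -
  define R where "R = real (r m) * real (Suc m)"
  have G: "0 \<le> G"
  proof (rule ccontr)
    assume "\<not> 0 \<le> G"
    then have "G * real (Suc m) \<le> 0" by (simp add: mult_nonpos_nonneg)
    with assms(3) show False by simp
  qed
  have r: "real (a m) \<le> real (r m)" "real (r m) \<le> R" "0 \<le> real (r m)"
    using r_ge_a[of m] unfolding R_def by (simp_all add: mult_le_cancel_left1)
  have "cT (a (Suc m)) \<le> cT (s m) + real (a m)"
    using real_count_upto_add_le[of _ "s m" "a m"] by (simp add: a_Suc)
  also have "cT (s m) \<le> cT (a m) + real (cl m) + real (r m) * (cY (Suc m) + real M)"
    using count_T_upper_Y_blocks[of "r m" m] unfolding s_def by simp
  also have "real (r m) * (cY (Suc m) + real M) \<le> G * R"
    using mult_left_mono[OF assms(1) r(3)] unfolding R_def by (simp add: mult_ac)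
  also have "cT (a m) \<le> real (a m)" by (rule real_count_upto_le)
  finally have "cT (a (Suc m)) \<le> 2 * real (a m) + G * real (a m) + G * R"
    using assms(2) by linarith
  moreover have "real (a m) \<le> G * R"
    using mult_left_mono[OF assms(3) r(3)] r(1) unfolding R_def by (simp add: mult_ac)
  moreover have "G * real (a m) \<le> G * R" using r G by (intro mult_left_mono) auto
  moreover have "G * R \<le> G * real (a (Suc m))"
  proof -
    have "r m * Suc m \<le> a (Suc m)" using s_ge[of m] a_Suc[of m] by simp
    then have "R \<le> real (a (Suc m))" unfolding R_def by (metis of_nat_le_iff of_nat_mult)
    with G show ?thesis by (intro mult_left_mono)
  qed
  ultimately show ?thesis by linarith
qed

lemma count_T_upper_in_level:
  assumes "cY (Suc m) + real M \<le> G * real (Suc m)" "real (cl m) \<le> G * real (a m)" "0 \<le> G"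
    and "cT (a m) \<le> 4 * G * real (a m)" "cT (a (Suc m)) \<le> 4 * G * real (a (Suc m))"
    and t: "a m \<le> t" "t < a (Suc m)"
  shows "cT t \<le> 8 * G * real t"
proof -
  have Gt: "G * real (a m) \<le> G * real t" using t(1) assms(3) by (intro mult_left_mono) auto
  from t show ?thesis
  proof (cases rule: level_cases)
    case 1
    have "cT t \<le> cT (u m 0)" using 1 by (intro real_count_upto_mono) simp
    also have "\<dots> \<le> cT (a m) + real (cl m)"
      using count_T_upper_Y_blocks[of 0 m] by simp
    finally show ?thesis using assms(2,3,4) Gt by (simp add: mult_nonneg_nonneg)
  next
    case (2 j)
    define X where "X = real j * real (Suc m)"
    have "cT t \<le> cT (u m (Suc j))" using 2 by (intro real_count_upto_mono) simp
    also have "\<dots> \<le> cT (a m) + real (cl m) + real (Suc j) * (cY (Suc m) + real M)"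
      using count_T_upper_Y_blocks[of "Suc j" m] 2(1) by simp
    also have "real (Suc j) * (cY (Suc m) + real M) \<le> G * X + G * real (Suc m)"
      using mult_left_mono[OF assms(1), of "real (Suc j)"] unfolding X_def by (simp add: algebra_simps)
    also have "G * real (Suc m) \<le> G * real (a m)"
      using a_ge_Suc[of m] assms(3) by (intro mult_left_mono) auto
    finally have "cT t \<le> 6 * G * real (a m) + G * X" using assms(2,4) by linarith
    moreover have "real (a m) + X \<le> real t"
      using real_u[of m j] 2(2) unfolding X_def by linarith
    then have "G * real (a m) + G * X \<le> G * real t"
      using assms(3) mult_left_mono[of "real (a m) + X" "real t" G] by (simp add: algebra_simps)
    moreover have "0 \<le> G * X" unfolding X_def using assms(3) by simp
    ultimately show ?thesis by linarith
  next
    case 3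
    have "real (a (Suc m)) \<le> 2 * real t" using 3 a_Suc[of m] a_le_s[of m] by simp
    then have "4 * G * real (a (Suc m)) \<le> 8 * G * real t"
      using assms(3) mult_left_mono[of "real (a (Suc m))" "2 * real t" "4 * G"] by simp
    moreover have "cT t \<le> cT (a (Suc m))" using t(2) by (intro real_count_upto_mono) simp
    ultimately show ?thesis using assms(5) by linarith
  qed
qed

lemma upper_dens_y_pos_if_T:
  assumes "upper_dens (cyl_visits T z M) > 0"
  shows "upper_dens (cyl_visits y z M) > 0"
proof (rule ccontr)
  assume not_pos: "\<not> upper_dens (cyl_visits y z M) > 0"
  obtain g where g: "g > 0" "\<exists>\<^sub>F n in sequentially. g * real n \<le> cT n"
    using assms unfolding upper_dens_pos_iff by blast
  define G where "G = g / 16"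
  have G: "G > 0" unfolding G_def using g(1) by simp
  have "\<not> (\<exists>\<^sub>F n in sequentially. G / 2 * real n \<le> cY n)"
    using not_pos G unfolding upper_dens_pos_iff by (metis half_gt_zero)
  then have "\<forall>\<^sub>F n in sequentially. cY n < G / 2 * real n"
    by (simp add: not_frequently not_le)
  then have "\<forall>\<^sub>F m in sequentially. cY (Suc m) < G / 2 * real (Suc m)"
    by (rule eventually_sequentially_Suc[THEN iffD2])
  moreover have "\<forall>\<^sub>F m in sequentially. real M + 1 \<le> G / 2 * real (Suc m)"
    using eventually_sequentially_Suc[THEN iffD2, OF eventually_le_mult_real[of "G / 2" "real M + 1"]] G
    by simp
  moreover have "\<forall>\<^sub>F m in sequentially. real (cl m) \<le> G * real (a m)"
    by (rule eventually_cl_le[OF G])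
  ultimately have "\<forall>\<^sub>F m in sequentially. cY (Suc m) + real M \<le> G * real (Suc m)
      \<and> real (cl m) \<le> G * real (a m) \<and> 1 \<le> G * real (Suc m)"
    by eventually_elim (use G in \<open>auto simp: field_simps\<close>)
  then obtain m1 where m1: "\<And>m. m \<ge> m1 \<Longrightarrow> cY (Suc m) + real M \<le> G * real (Suc m)
      \<and> real (cl m) \<le> G * real (a m) \<and> 1 \<le> G * real (Suc m)"
    unfolding eventually_sequentially by blast
  have level_end: "cT (a (Suc m)) \<le> 4 * G * real (a (Suc m))" if "m \<ge> m1" for m
    using count_T_upper_level_end m1[OF that] by blast
  have small: "cT t \<le> g / 2 * real t" if t: "a (Suc m1) \<le> t" for t
  proof -
    obtain m where m: "Suc m1 \<le> m" "a m \<le> t" "t < a (Suc m)" using obtain_level[OF t] .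
    then obtain m' where "m = Suc m'" "m1 \<le> m'" by (cases m) auto
    then have "cT (a m) \<le> 4 * G * real (a m)" using level_end by simp
    then have "cT t \<le> 8 * G * real t"
      using count_T_upper_in_level[of m G t] m m1[of m] level_end[of m] G by simp
    then show ?thesis unfolding G_def by simp
  qed
  obtain t where t: "t \<ge> max (a (Suc m1)) 1" "g * real t \<le> cT t"
    using g(2) unfolding frequently_sequentially by blast
  then have "g * real t \<le> g / 2 * real t" using small[of t] by simp
  with g(1) t(1) show False by simp
qed

lemma max_window_y_le_T: "max_window (cyl_visits y z M) l \<le> max_window (cyl_visits T z M) l"
proof -
  obtain q where q: "max_window (cyl_visits y z M) l = card (cyl_visits y z M \<inter> {q+1..q+l})"
    using max_window_attained by blast
  define n where "n = q + l + M"
  have "0 < r n" using r_ge_a[of n] a_pos[of n] by simp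
  then have "card (cyl_visits T z M \<inter> {u n 0 + q + 1..u n 0 + (q + l)}) = card (cyl_visits y z M \<inter> {q+1..q+l})"
    by (rule card_cyl_visits_T_Y_block) (simp add: n_def)
  then have "card (cyl_visits y z M \<inter> {q+1..q+l}) = card (cyl_visits T z M \<inter> {u n 0 + q + 1..u n 0 + q + l})"
    by (simp add: add.assoc)
  also have "\<dots> \<le> max_window (cyl_visits T z M) l" by (rule max_window_ge)
  finally show ?thesis using q by simp
qed

lemma banach_upper_T_pos_if_y:
  "banach_upper (cyl_visits y z M) > 0 \<Longrightarrow> banach_upper (cyl_visits T z M) > 0"
  unfolding banach_upper_pos_iff using max_window_y_le_T by (meson of_nat_le_iff order_trans)

end

end

section \<open>The omega-sets of \<open>T(y)\<close>\<close>

context tmap_PiL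
begin

lemma cyl_visits_y_nonempty:
  assumes "P \<in> PiL k L"
  shows "cyl_visits y P l \<noteq> {}"
proof -
  have "P \<in> omega_lim (PiL k L) y" using omega_lim_y assms by simp
  then have "infinite (visits y (sball (PiL k L) P ((1/2)^l)))"
    unfolding omega_lim_def by simp
  moreover have "visits y (sball (PiL k L) P ((1/2)^l)) \<subseteq> cyl_visits y P l"
    by (rule visits_sball_subset_cyl_visits) simp
  ultimately have "infinite (cyl_visits y P l)" by (rule infinite_super[rotated])
  then show ?thesis by auto
qed

lemma cyl_visits_T_nonempty:
  assumes "P \<in> PiL k L"
  shows "cyl_visits T P l \<noteq> {}"
proof -
  obtain p where p: "p \<in> cyl_visits y P l" using cyl_visits_y_nonempty[OF assms] by blast
  define n where "n = p + l"
  have "0 < r n" using r_ge_a[of n] a_pos[of n] by simp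
  moreover have "1 \<le> p" using p unfolding cyl_visits_def by simp
  ultimately have "u n 0 + p \<in> cyl_visits T P l"
    using p cyl_visits_T_Y_block[of 0 n p l P] unfolding n_def by simp
  then show ?thesis by blast
qed

lemma alternating_period3_PiL: "alternating \<in> PiL k L" "period3 \<in> PiL k L"
  using alternating_PiL period3_PiL k_ge L_ge by simp_all

lemma omega_banach_lower_y: "omega_xi (PiL k L) banach_lower y = {}"
proof (rule omega_xi_banach_lower_empty[where P = alternating and Q = period3 and m = 4])
  show "cyl_visits y alternating l \<noteq> {}" "cyl_visits y period3 l \<noteq> {}" for l
    using cyl_visits_y_nonempty alternating_period3_PiL by blast+
qed (rule alternating_period3_no_common_word)

lemma omega_banach_lower_T: "omega_xi (FullShift k) banach_lower T = {}"
proof (rule omega_xi_banach_lower_empty[where P = alternating and Q = period3 and m = 4])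
  show "cyl_visits T alternating l \<noteq> {}" "cyl_visits T period3 l \<noteq> {}" for l
    using cyl_visits_T_nonempty alternating_period3_PiL by blast+
qed (rule alternating_period3_no_common_word)

lemma omega_T_eq: "pos_mono \<xi> \<Longrightarrow> omega_xi (FullShift k) \<xi> T = {z \<in> FullShift k. \<forall>M. \<xi> (cyl_visits T z M) > 0}"
  by (intro omega_xi_eq_cyl_visits funpow_shift_FullShift T_FullShift)

lemma omega_y_eq: "pos_mono \<xi> \<Longrightarrow> omega_xi (PiL k L) \<xi> y = {z \<in> PiL k L. \<forall>M. \<xi> (cyl_visits y z M) > 0}"
  by (intro omega_xi_eq_cyl_visits funpow_shift_PiL y_PiL)

text \<open>Points outside \<open>\<Pi>\<^sub>L\<close> are visited by \<open>T(y)\<close> only at run windows.\<close>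

lemma PiL_if_banach_upper_cyl_visits_T:
  assumes "z \<in> FullShift k" "\<And>M. banach_upper (cyl_visits T z M) > 0"
  shows "z \<in> PiL k L"
proof (rule ccontr)
  assume "z \<notin> PiL k L"
  then obtain M where "cyl_visits T z M \<subseteq> run_windows M"
    using assms(1) by (rule cyl_visits_T_subset_run_windows)
  with assms(2)[of M] have "banach_upper (run_windows M) > 0"
    by (rule pos_mono_banach_upper[unfolded pos_mono_def, rule_format, rotated])
  with not_banach_upper_run_windows_pos show False by blast
qed

lemma omega_lower_dens_T: "omega_xi (FullShift k) lower_dens T = omega_xi (PiL k L) lower_dens y"
  unfolding omega_T_eq[OF pos_mono_lower_dens] omega_y_eq[OF pos_mono_lower_dens]
proof (intro set_eqI iffI)
  fix z assume z: "z \<in> {z \<in> FullShift k. \<forall>M. lower_dens (cyl_visits T z M) > 0}"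
  then have "banach_upper (cyl_visits T z M) > 0" for M
    by (simp add: banach_upper_pos_if_upper_dens_pos upper_dens_pos_if_lower_dens_pos)
  with z have "z \<in> PiL k L" by (intro PiL_if_banach_upper_cyl_visits_T) auto
  with z show "z \<in> {z \<in> PiL k L. \<forall>M. lower_dens (cyl_visits y z M) > 0}"
    by (simp add: lower_dens_y_pos_if_T)
next
  fix z assume "z \<in> {z \<in> PiL k L. \<forall>M. lower_dens (cyl_visits y z M) > 0}"
  then show "z \<in> {z \<in> FullShift k. \<forall>M. lower_dens (cyl_visits T z M) > 0}"
    using PiL_subset_FullShift by (auto simp: lower_dens_T_pos_if_y)
qed

lemma omega_upper_dens_T: "omega_xi (FullShift k) upper_dens T = omega_xi (PiL k L) upper_dens y"
  unfolding omega_T_eq[OF pos_mono_upper_dens] omega_y_eq[OF pos_mono_upper_dens]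
proof (intro set_eqI iffI)
  fix z assume z: "z \<in> {z \<in> FullShift k. \<forall>M. upper_dens (cyl_visits T z M) > 0}"
  then have "banach_upper (cyl_visits T z M) > 0" for M
    by (simp add: banach_upper_pos_if_upper_dens_pos)
  with z have "z \<in> PiL k L" by (intro PiL_if_banach_upper_cyl_visits_T) auto
  with z show "z \<in> {z \<in> PiL k L. \<forall>M. upper_dens (cyl_visits y z M) > 0}"
    by (simp add: upper_dens_y_pos_if_T)
next
  fix z assume "z \<in> {z \<in> PiL k L. \<forall>M. upper_dens (cyl_visits y z M) > 0}"
  then show "z \<in> {z \<in> FullShift k. \<forall>M. upper_dens (cyl_visits T z M) > 0}"
    using PiL_subset_FullShift by (auto simp: upper_dens_T_pos_if_y)
qed

lemma omega_banach_upper_T: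
  assumes "omega_xi (PiL k L) banach_upper y = PiL k L"
  shows "omega_xi (FullShift k) banach_upper T = PiL k L"
  unfolding omega_T_eq[OF pos_mono_banach_upper]
proof (intro set_eqI iffI)
  fix z assume "z \<in> {z \<in> FullShift k. \<forall>M. banach_upper (cyl_visits T z M) > 0}"
  then show "z \<in> PiL k L" by (intro PiL_if_banach_upper_cyl_visits_T) auto
next
  fix z assume "z \<in> PiL k L"
  then have "banach_upper (cyl_visits y z M) > 0" for M
    using assms unfolding omega_y_eq[OF pos_mono_banach_upper] by blast
  with \<open>z \<in> PiL k L\<close> show "z \<in> {z \<in> FullShift k. \<forall>M. banach_upper (cyl_visits T z M) > 0}"
    using PiL_subset_FullShift by (auto simp: banach_upper_T_pos_if_y)
qed

lemma omega_banach_upper_T_psubset: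
  assumes "omega_xi (PiL k L) banach_upper y = PiL k L"
  shows "omega_xi (FullShift k) banach_upper T \<subset> omega_lim (FullShift k) T"
proof
  show "omega_xi (FullShift k) banach_upper T \<subseteq> omega_lim (FullShift k) T"
    unfolding omega_xi_def omega_lim_def using infinite_if_banach_upper_pos by blast
  show "omega_xi (FullShift k) banach_upper T \<noteq> omega_lim (FullShift k) T"
    using omega_banach_upper_T[OF assms] T_in_omega_lim T_notin_PiL by blast
qed

lemma sat_case_T:
  assumes "sat_case (PiL k L) y i False"
  shows "sat_case (FullShift k) T i True"
proof -
  obtain r1 r2 r3 where pattern: "case_pattern i = (r1, r2, r3)" by (metis prod_cases3)
  have y: "rel_step r1 (omega_xi (PiL k L) banach_lower y) (omega_xi (PiL k L) lower_dens y)"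
    "rel_step r2 (omega_xi (PiL k L) lower_dens y) (omega_xi (PiL k L) upper_dens y)"
    "rel_step r3 (omega_xi (PiL k L) upper_dens y) (omega_xi (PiL k L) banach_upper y)"
    "rel_step False (omega_xi (PiL k L) banach_upper y) (omega_lim (PiL k L) y)"
    using assms pattern unfolding sat_case_def by simp_all
  have banach_y: "omega_xi (PiL k L) banach_upper y = PiL k L"
    using y(4) omega_lim_y unfolding rel_step_def by simp
  then have "omega_xi (PiL k L) banach_upper y = omega_xi (FullShift k) banach_upper T"
    using omega_banach_upper_T by simp
  then show ?thesis
    unfolding sat_case_def pattern
    using y(1-3) omega_banach_lower_y omega_banach_lower_T omega_lower_dens_T omega_upper_dens_T
      omega_banach_upper_T_psubset[OF banach_y]
    by (simp add: rel_step_def)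
qed

end

theorem lemma5p4:
  fixes k L i :: nat and C :: "nat \<Rightarrow> nat list" and A1 :: "nat list" and y :: "nat \<Rightarrow> nat"
  assumes "k \<ge> 2" and "L \<ge> 3"
    and "{C n | n. n \<ge> 1} = {w. contained (PiL k L) w}"
    and "set A1 \<subseteq> {..<k}" and "\<not> contained (PiL k L) A1"
    and "(\<lambda>m. real (length (C (Suc m))) / real (length (Aw C A1 y m))) \<longlonglongrightarrow> 0"
    and "y \<in> Trans (PiL k L)"
    and "i \<in> {1..6}"
    and "sat_case (PiL k L) y i False"
  shows "sat_case (FullShift k) (Tmap C A1 y) i True"
proof -
  have "alternating \<in> PiL k L" using alternating_PiL assms(1,2) by simp
  then have "contained (PiL k L) []" unfolding contained_def by auto
  with assms(5) have "A1 \<noteq> []" by auto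
  then interpret tmap_construction C A1 y by unfold_locales
  interpret tmap_PiL C A1 y k L
    using assms(1-5,7) assms(6)[folded cl_def a_def] by unfold_locales
  show ?thesis using sat_case_T[OF assms(9)] unfolding T_def .
qed

end
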